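(* Let $\mathcal{A}$ be a polycategory. Then $\mathsf{CProc}(\mathcal{A})$ has additives: for every finite family of formulas $X_i$ ($i\in I$), the formula $\sum_{i\in I}a_i{:}X_i$ is a poly-sum and $\prod_{i\in I}a_i{:}X_i$ is a poly-product of the $X_i$ in $\mathsf{CProc}(\mathcal{A})$.
   Context: Formulas over $\mathcal{A}$: every object (atom) of $\mathcal{A}$ is a formula; for a finite index set $I$ and formulas $X_i$: sum $\sum_{i\in I}a_i{:}X_i$, product $\prod_{i\in I}a_i{:}X_i$ (distinct events $a_i$), tensor $\bigotimes_{i\in I}X_i$, par $\mathrm{Par}_{i\in I}X_i$; empty cases $\mathbf 0,\mathbf 1,\top,\bot$. A sequent $\Gamma\vdash\Delta$ consists of lists of channel-labelled formulas $\alpha{:}X$ with distinct channel names ($\alpha{:}\bigotimes_iX_i$, $\alpha{:}\mathrm{Par}_iX_i$ name components $\alpha_i$); $\Lambda(\Gamma\vdash\Delta)$ is the set of channel names of the sequent, $\Lambda(t)$ that of the type of $t$. Terms: $\alpha\equiv_A\beta::\alpha{:}A\vdash\beta{:}A$ for atoms; maps of $\mathcal{A}$ as axiom terms; cotuple $\alpha\{a_i\mapsto f_i\}_i::\Gamma,\alpha{:}\sum_ia_i{:}X_i\vdash\Delta$ from $f_i::\Gamma,\alpha{:}X_i\vdash\Delta$; tuple $\alpha\{a_i\mapsto f_i\}_i::\Gamma\vdash\alpha{:}\prod_ia_i{:}X_i,\Delta$ from $f_i::\Gamma\vdash\alpha{:}X_i,\Delta$; projection $\alpha[a_k]f::\Gamma,\alpha{:}\prod_ia_i{:}X_i\vdash\Delta$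 from $f::\Gamma,\alpha{:}X_k\vdash\Delta$; injection $\alpha[a_k]f::\Gamma\vdash\alpha{:}\sum_ia_i{:}X_i,\Delta$ from $f::\Gamma\vdash\alpha{:}X_k,\Delta$ ($I\neq\emptyset$); ltensor $\alpha\langle(\alpha_i)_i\mapsto f\rangle::\Gamma,\alpha{:}\bigotimes_iX_i\vdash\Delta$ from $f::\Gamma,\{\alpha_i{:}X_i\}_i\vdash\Delta$; rpar dually; lpar $\alpha\langle\alpha_i\mid\Lambda(\Gamma_i\vdash\Delta_i)\mapsto f_i\rangle_i::\Gamma,\alpha{:}\mathrm{Par}_iX_i\vdash\Delta$ from $f_i::\Gamma_i,\alpha_i{:}X_i\vdash\Delta_i$ where $\Gamma=[\Gamma_i]_i,\Delta=[\Delta_i]_i$; rtensor dually; cut $f;_\gamma g::\Gamma,\Gamma'\vdash\Delta,\Delta'$ from $f::\Gamma\vdash\Delta,\gamma{:}Z$, $g::\gamma{:}Z,\Gamma'\vdash\Delta'$ ($\gamma$ the only shared channel). Identity terms $1_X$ on compound formulas are defined by expansion (e.g. $1_{\sum a_i:X_i}=\alpha\{a_i\mapsto\beta[a_i]1_{X_i}\}_i$). $\sim$ is the congruence on terms generated by channel renaming, the cut-elimination rewrites (1) $f;_\gamma1\Rightarrow f$, (2) $1;_\gamma f\Rightarrow f$, (3)–(10) commuting a cut past a rule acting on a channel $\alpha\neq\gamma$ (e.g. (3) $\alpha\{a_i\mapsto f_i\}_i;_\gamma g\Rightarrow\alpha\{a_i\mapsto f_i;_\gamma g\}_i$, (4)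 $g;_\gamma\alpha\{a_i\mapsto f_i\}_i\Rightarrow\alpha\{a_i\mapsto g;_\gamma f_i\}_i$, (5),(6) $\alpha[a]f;_\gamma g\Rightarrow\alpha[a](f;_\gamma g)$ and dual, (7),(8) $\alpha\langle(\alpha_i)\mapsto f\rangle;_\gamma g\Rightarrow\alpha\langle(\alpha_i)\mapsto f;_\gamma g\rangle$ and dual, (9),(10) moving the cut into the branch $\alpha_k$ of a fork whose channel set $\Lambda_k$ contains $\gamma$), the principal rewrites (11) $\gamma[a_k]f;_\gamma\gamma\{a_i\mapsto g_i\}_i\Rightarrow f;_\gamma g_k$, (12) its dual, (13) $\gamma\langle\alpha_i\mid\Lambda_i\mapsto f_i\rangle_{i=1}^n;_\gamma\gamma\langle(\alpha_i)_{i=1}^n\mapsto g\rangle\Rightarrow f_n;_{\alpha_n}(\cdots(f_1;_{\alpha_1}g)\cdots)$, (14) its dual, and the permuting conversions (15)–(24) which interchange two consecutive rules acting on distinct channels $\alpha,\beta$ (e.g. $\alpha\{a_i\mapsto\beta\{b_j\mapsto f_{ij}\}_j\}_i\leftrightarrow\beta\{b_j\mapsto\alpha\{a_i\mapsto f_{ij}\}_i\}_j$, $\alpha[a]\beta[b]f\leftrightarrow\beta[b]\alpha[a]f$, etc.) whenever both sides are well typed. $\mathsf{CProc}(\mathcal{A})$ is the polycategory whose objects are formulas, whose morphisms $\Gamma\to\Delta$ are $\sim$-classes of terms of type $\Gamma\vdash\Delta$, with identities $1_X$ and composition by cut. In a polycategory, $\sum_iX_i$ is a poly-sum of the $X_i$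 if there is a bijection between families $\{f_i:\Gamma,X_i\to\Delta\}_i$ and maps $\alpha\{f_i\}_i:\Gamma,\sum_iX_i\to\Delta$, natural in that $h;_\gamma\alpha\{f_i\}_i=\alpha\{h;_\gamma f_i\}_i$ and $\alpha\{f_i\}_i;_\gamma h=\alpha\{f_i;_\gamma h\}_i$ for $\alpha\neq\gamma$; poly-products are the dual notion. *)

theory Defs
  imports Main "HOL-Library.FuncSet"
begin

section \<open>The polycategory A (its data: objects = type 'a, maps = type 'm)\<close>

text \<open>A map f of A has a list of source objects src f and target objects tgt f;
  idm A is the identity on the object A; cmp f i j g composes the i-th output
  of f with the j-th input of g (symmetric, unrestricted cut).\<close>

definition polycategory ::
  "('m \<Rightarrow> 'a list) \<Rightarrow> ('m \<Rightarrow> 'a list) \<Rightarrow> ('a \<Rightarrow> 'm) \<Rightarrow> ('m \<Rightarrow> nat \<Rightarrow> nat \<Rightarrow> 'm \<Rightarrow> 'm) \<Rightarrow> bool"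
where
  "polycategory src tgt idm cmp \<longleftrightarrow>
     (\<forall>A. src (idm A) = [A] \<and> tgt (idm A) = [A]) \<and>
     (\<forall>f g i j. i < length (tgt f) \<and> j < length (src g) \<and> tgt f ! i = src g ! j \<longrightarrow>
        src (cmp f i j g) = take j (src g) @ src f @ drop (Suc j) (src g) \<and>
        tgt (cmp f i j g) = take i (tgt f) @ tgt g @ drop (Suc i) (tgt f)) \<and>
     (\<forall>A g j. j < length (src g) \<and> src g ! j = A \<longrightarrow> cmp (idm A) 0 j g = g) \<and>
     (\<forall>A f i. i < length (tgt f) \<and> tgt f ! i = A \<longrightarrow> cmp f i 0 (idm A) = f) \<and>
     (\<forall>f g h i j k l. i < length (tgt f) \<and> j < length (src g) \<and> tgt f ! i = src g ! j \<and>
        k < length (tgt g) \<and> l < length (src h) \<and> tgt g ! k = src h ! l \<longrightarrow>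
        cmp (cmp f i j g) (i + k) l h = cmp f i (l + j) (cmp g k l h))"

datatype ('a, 'e) fm =
    Atom 'a
  | Sum "('e \<times> ('a, 'e) fm) list"
  | Prod "('e \<times> ('a, 'e) fm) list"
  | Tens "('a, 'e) fm list"
  | Par "('a, 'e) fm list"

inductive wf_fm :: "('a, 'e) fm \<Rightarrow> bool" where
  "wf_fm (Atom A)"
| "distinct (map fst qs) \<Longrightarrow> \<forall>p\<in>set qs. wf_fm (snd p) \<Longrightarrow> wf_fm (Sum qs)"
| "distinct (map fst qs) \<Longrightarrow> \<forall>p\<in>set qs. wf_fm (snd p) \<Longrightarrow> wf_fm (Prod qs)"
| "\<forall>X\<in>set Xs. wf_fm X \<Longrightarrow> wf_fm (Tens Xs)"
| "\<forall>X\<in>set Xs. wf_fm X \<Longrightarrow> wf_fm (Par Xs)"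

text \<open>As in the paper, the same syntax is used for
  left and right rules: Case = cotuple/tuple \<alpha>{a_i \<mapsto> f_i}, Sel = projection/injection
  \<alpha>[a]f, Split = ltensor/rpar \<alpha>\<langle>(\<alpha>_i) \<mapsto> f\<rangle>, Fork = lpar/rtensor
  \<alpha>\<langle>\<alpha>_i | \<Lambda>_i \<mapsto> f_i\<rangle>_i; Eq \<alpha> A \<beta> is \<alpha> \<equiv>_A \<beta>; Ax m ins outs is the map m of A
  used as an axiom on the channels ins (inputs) and outs (outputs); Cut \<gamma> f g is f ;_\<gamma> g.\<close>

datatype ('a, 'm, 'e, 'c) tm =
    Eq 'c 'a 'c
  | Ax 'm "'c list" "'c list"
  | Case 'c "('e \<times> ('a, 'm, 'e, 'c) tm) list"
  | Sel 'c 'e "('a, 'm, 'e, 'c) tm"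
  | Split 'c "'c list" "('a, 'm, 'e, 'c) tm"
  | Fork 'c "('c \<times> 'c set \<times> ('a, 'm, 'e, 'c) tm) list"
  | Cut 'c "('a, 'm, 'e, 'c) tm" "('a, 'm, 'e, 'c) tm"

text \<open>All channel names occurring in a term (free, bound, or in channel-set annotations).\<close>
fun chans :: "('a, 'm, 'e, 'c) tm \<Rightarrow> 'c set" where
  "chans (Eq \<alpha> A \<beta>) = {\<alpha>, \<beta>}"
| "chans (Ax m ins outs) = set ins \<union> set outs"
| "chans (Case \<alpha> ps) = insert \<alpha> (\<Union> (set (map (\<lambda>p. chans (snd p)) ps)))"
| "chans (Sel \<alpha> a f) = insert \<alpha> (chans f)"
| "chans (Split \<alpha> cs f) = insert \<alpha> (set cs \<union> chans f)"
| "chans (Fork \<alpha> bs) = insert \<alpha> (\<Union> (set (map (\<lambda>b. insert (fst b) (fst (snd b) \<union> chans (snd (snd b)))) bs)))"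
| "chans (Cut \<gamma> f g) = insert \<gamma> (chans f \<union> chans g)"

text \<open>Renaming every occurrence of the channel x into y (used only with y fresh).\<close>
fun ren :: "'c \<Rightarrow> 'c \<Rightarrow> ('a, 'm, 'e, 'c) tm \<Rightarrow> ('a, 'm, 'e, 'c) tm" where
  "ren x y (Eq \<alpha> A \<beta>) = Eq (if \<alpha> = x then y else \<alpha>) A (if \<beta> = x then y else \<beta>)"
| "ren x y (Ax m ins outs) = Ax m (map (\<lambda>c. if c = x then y else c) ins) (map (\<lambda>c. if c = x then y else c) outs)"
| "ren x y (Case \<alpha> ps) = Case (if \<alpha> = x then y else \<alpha>) (map (\<lambda>p. (fst p, ren x y (snd p))) ps)"
| "ren x y (Sel \<alpha> a f) = Sel (if \<alpha> = x then y else \<alpha>) a (ren x y f)"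
| "ren x y (Split \<alpha> cs f) = Split (if \<alpha> = x then y else \<alpha>) (map (\<lambda>c. if c = x then y else c) cs) (ren x y f)"
| "ren x y (Fork \<alpha> bs) = Fork (if \<alpha> = x then y else \<alpha>)
     (map (\<lambda>b. (if fst b = x then y else fst b, (\<lambda>c. if c = x then y else c) ` fst (snd b), ren x y (snd (snd b)))) bs)"
| "ren x y (Cut \<gamma> f g) = Cut (if \<gamma> = x then y else \<gamma>) (ren x y f) (ren x y g)"

text \<open>A side of a sequent is a finite assignment of formulas to channel names
  (channel-labelled formulas with distinct names; order is immaterial).\<close>
type_synonym ('c, 'a, 'e) side = "'c \<Rightarrow> ('a, 'e) fm option"

definition seq_ok :: "('c, 'a, 'e) side \<Rightarrow> ('c, 'a, 'e) side \<Rightarrow> bool" where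
  "seq_ok \<Gamma> \<Delta> \<longleftrightarrow> finite (dom \<Gamma>) \<and> finite (dom \<Delta>) \<and> dom \<Gamma> \<inter> dom \<Delta> = {} \<and>
     (\<forall>X \<in> ran \<Gamma> \<union> ran \<Delta>. wf_fm X)"

definition joinall :: "('c, 'a, 'e) side list \<Rightarrow> ('c, 'a, 'e) side" where
  "joinall Gs = foldr (++) Gs Map.empty"

inductive tp :: "('m \<Rightarrow> 'a list) \<Rightarrow> ('m \<Rightarrow> 'a list) \<Rightarrow> ('a, 'm, 'e, 'c) tm
                  \<Rightarrow> ('c, 'a, 'e) side \<Rightarrow> ('c, 'a, 'e) side \<Rightarrow> bool"
  for src tgt :: "'m \<Rightarrow> 'a list" where
  eq: "\<alpha> \<noteq> \<beta> \<Longrightarrow> tp src tgt (Eq \<alpha> A \<beta>) [\<alpha> \<mapsto> Atom A] [\<beta> \<mapsto> Atom A]"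
| ax: "distinct (ins @ outs) \<Longrightarrow> length ins = length (src m) \<Longrightarrow> length outs = length (tgt m) \<Longrightarrow>
       tp src tgt (Ax m ins outs) (map_of (zip ins (map Atom (src m)))) (map_of (zip outs (map Atom (tgt m))))"
| cotuple: "seq_ok (\<Gamma>(\<alpha> \<mapsto> Sum qs)) \<Delta> \<Longrightarrow> \<alpha> \<notin> dom \<Gamma> \<Longrightarrow> distinct (map fst qs) \<Longrightarrow>
       map fst ps = map fst qs \<Longrightarrow>
       \<forall>i < length ps. tp src tgt (snd (ps ! i)) (\<Gamma>(\<alpha> \<mapsto> snd (qs ! i))) \<Delta> \<Longrightarrow>
       tp src tgt (Case \<alpha> ps) (\<Gamma>(\<alpha> \<mapsto> Sum qs)) \<Delta>"
| tuple: "seq_ok \<Gamma> (\<Delta>(\<alpha> \<mapsto> Prod qs)) \<Longrightarrow> \<alpha> \<notin> dom \<Delta> \<Longrightarrow> distinct (map fst qs) \<Longrightarrow>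
       map fst ps = map fst qs \<Longrightarrow>
       \<forall>i < length ps. tp src tgt (snd (ps ! i)) \<Gamma> (\<Delta>(\<alpha> \<mapsto> snd (qs ! i))) \<Longrightarrow>
       tp src tgt (Case \<alpha> ps) \<Gamma> (\<Delta>(\<alpha> \<mapsto> Prod qs))"
| proj: "seq_ok (\<Gamma>(\<alpha> \<mapsto> Prod qs)) \<Delta> \<Longrightarrow> \<alpha> \<notin> dom \<Gamma> \<Longrightarrow> distinct (map fst qs) \<Longrightarrow>
       (a, X) \<in> set qs \<Longrightarrow> tp src tgt f (\<Gamma>(\<alpha> \<mapsto> X)) \<Delta> \<Longrightarrow>
       tp src tgt (Sel \<alpha> a f) (\<Gamma>(\<alpha> \<mapsto> Prod qs)) \<Delta>"
| inj: "seq_ok \<Gamma> (\<Delta>(\<alpha> \<mapsto> Sum qs)) \<Longrightarrow> \<alpha> \<notin> dom \<Delta> \<Longrightarrow> distinct (map fst qs) \<Longrightarrow>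
       (a, X) \<in> set qs \<Longrightarrow> tp src tgt f \<Gamma> (\<Delta>(\<alpha> \<mapsto> X)) \<Longrightarrow>
       tp src tgt (Sel \<alpha> a f) \<Gamma> (\<Delta>(\<alpha> \<mapsto> Sum qs))"
| ltensor: "seq_ok (\<Gamma>(\<alpha> \<mapsto> Tens Xs)) \<Delta> \<Longrightarrow> \<alpha> \<notin> dom \<Gamma> \<Longrightarrow>
       length cs = length Xs \<Longrightarrow> distinct cs \<Longrightarrow> set cs \<inter> (dom \<Gamma> \<union> dom \<Delta>) = {} \<Longrightarrow>
       tp src tgt f (\<Gamma> ++ map_of (zip cs Xs)) \<Delta> \<Longrightarrow>
       tp src tgt (Split \<alpha> cs f) (\<Gamma>(\<alpha> \<mapsto> Tens Xs)) \<Delta>"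
| rpar: "seq_ok \<Gamma> (\<Delta>(\<alpha> \<mapsto> Par Xs)) \<Longrightarrow> \<alpha> \<notin> dom \<Delta> \<Longrightarrow>
       length cs = length Xs \<Longrightarrow> distinct cs \<Longrightarrow> set cs \<inter> (dom \<Gamma> \<union> dom \<Delta>) = {} \<Longrightarrow>
       tp src tgt f \<Gamma> (\<Delta> ++ map_of (zip cs Xs)) \<Longrightarrow>
       tp src tgt (Split \<alpha> cs f) \<Gamma> (\<Delta>(\<alpha> \<mapsto> Par Xs))"
| lpar: "seq_ok ((joinall Gs)(\<alpha> \<mapsto> Par Xs)) (joinall Ds) \<Longrightarrow> \<alpha> \<notin> dom (joinall Gs) \<Longrightarrow>
       length bs = length Xs \<Longrightarrow> length Gs = length bs \<Longrightarrow> length Ds = length bs \<Longrightarrow>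
       \<forall>i < length bs. \<forall>j < length bs. i \<noteq> j \<longrightarrow>
          (dom (Gs ! i) \<union> dom (Ds ! i)) \<inter> (dom (Gs ! j) \<union> dom (Ds ! j)) = {} \<Longrightarrow>
       \<forall>i < length bs. fst (snd (bs ! i)) = dom (Gs ! i) \<union> dom (Ds ! i) \<and>
          fst (bs ! i) \<notin> fst (snd (bs ! i)) \<and>
          tp src tgt (snd (snd (bs ! i))) ((Gs ! i)(fst (bs ! i) \<mapsto> Xs ! i)) (Ds ! i) \<Longrightarrow>
       tp src tgt (Fork \<alpha> bs) ((joinall Gs)(\<alpha> \<mapsto> Par Xs)) (joinall Ds)"
| rtensor: "seq_ok (joinall Gs) ((joinall Ds)(\<alpha> \<mapsto> Tens Xs)) \<Longrightarrow> \<alpha> \<notin> dom (joinall Ds) \<Longrightarrow>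
       length bs = length Xs \<Longrightarrow> length Gs = length bs \<Longrightarrow> length Ds = length bs \<Longrightarrow>
       \<forall>i < length bs. \<forall>j < length bs. i \<noteq> j \<longrightarrow>
          (dom (Gs ! i) \<union> dom (Ds ! i)) \<inter> (dom (Gs ! j) \<union> dom (Ds ! j)) = {} \<Longrightarrow>
       \<forall>i < length bs. fst (snd (bs ! i)) = dom (Gs ! i) \<union> dom (Ds ! i) \<and>
          fst (bs ! i) \<notin> fst (snd (bs ! i)) \<and>
          tp src tgt (snd (snd (bs ! i))) (Gs ! i) ((Ds ! i)(fst (bs ! i) \<mapsto> Xs ! i)) \<Longrightarrow>
       tp src tgt (Fork \<alpha> bs) (joinall Gs) ((joinall Ds)(\<alpha> \<mapsto> Tens Xs))"
| cut: "tp src tgt f \<Gamma> (\<Delta>(\<gamma> \<mapsto> Z)) \<Longrightarrow> tp src tgt g (\<Gamma>'(\<gamma> \<mapsto> Z)) \<Delta>' \<Longrightarrow>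
       \<gamma> \<notin> dom \<Gamma> \<union> dom \<Delta> \<union> dom \<Gamma>' \<union> dom \<Delta>' \<Longrightarrow>
       (dom \<Gamma> \<union> dom \<Delta>) \<inter> (dom \<Gamma>' \<union> dom \<Delta>') = {} \<Longrightarrow>
       tp src tgt (Cut \<gamma> f g) (\<Gamma> ++ \<Gamma>') (\<Delta> ++ \<Delta>')"

section \<open>Identity terms 1_X :: \<alpha>:X \<turnstile> \<beta>:X, defined by expansion (bound names arbitrary)\<close>

inductive is_id :: "('a, 'e) fm \<Rightarrow> 'c \<Rightarrow> 'c \<Rightarrow> ('a, 'm, 'e, 'c) tm \<Rightarrow> bool" where
  "\<alpha> \<noteq> \<beta> \<Longrightarrow> is_id (Atom A) \<alpha> \<beta> (Eq \<alpha> A \<beta>)"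
| "\<alpha> \<noteq> \<beta> \<Longrightarrow> length ts = length qs \<Longrightarrow>
   \<forall>i < length qs. is_id (snd (qs ! i)) \<alpha> \<beta> (ts ! i) \<Longrightarrow>
   is_id (Sum qs) \<alpha> \<beta> (Case \<alpha> (map (\<lambda>i. (fst (qs ! i), Sel \<beta> (fst (qs ! i)) (ts ! i))) [0..<length qs]))"
| "\<alpha> \<noteq> \<beta> \<Longrightarrow> length ts = length qs \<Longrightarrow>
   \<forall>i < length qs. is_id (snd (qs ! i)) \<alpha> \<beta> (ts ! i) \<Longrightarrow>
   is_id (Prod qs) \<alpha> \<beta> (Case \<beta> (map (\<lambda>i. (fst (qs ! i), Sel \<alpha> (fst (qs ! i)) (ts ! i))) [0..<length qs]))"
| "\<alpha> \<noteq> \<beta> \<Longrightarrow> length cs = length Xs \<Longrightarrow> length ds = length Xs \<Longrightarrow> length ts = length Xs \<Longrightarrow>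
   distinct (cs @ ds) \<Longrightarrow> \<alpha> \<notin> set (cs @ ds) \<Longrightarrow> \<beta> \<notin> set (cs @ ds) \<Longrightarrow>
   \<forall>i < length Xs. is_id (Xs ! i) (cs ! i) (ds ! i) (ts ! i) \<Longrightarrow>
   is_id (Tens Xs) \<alpha> \<beta> (Split \<alpha> cs (Fork \<beta> (map (\<lambda>i. (ds ! i, {cs ! i}, ts ! i)) [0..<length Xs])))"
| "\<alpha> \<noteq> \<beta> \<Longrightarrow> length cs = length Xs \<Longrightarrow> length ds = length Xs \<Longrightarrow> length ts = length Xs \<Longrightarrow>
   distinct (cs @ ds) \<Longrightarrow> \<alpha> \<notin> set (cs @ ds) \<Longrightarrow> \<beta> \<notin> set (cs @ ds) \<Longrightarrow>
   \<forall>i < length Xs. is_id (Xs ! i) (cs ! i) (ds ! i) (ts ! i) \<Longrightarrow>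
   is_id (Par Xs) \<alpha> \<beta> (Split \<beta> ds (Fork \<alpha> (map (\<lambda>i. (cs ! i, {ds ! i}, ts ! i)) [0..<length Xs])))"

section \<open>Generating steps of \<sim>\<close>

inductive step :: "('a, 'm, 'e, 'c) tm \<Rightarrow> ('a, 'm, 'e, 'c) tm \<Rightarrow> bool" where
  alpha_cut: "y \<notin> chans f \<Longrightarrow> y \<notin> chans g \<Longrightarrow> step (Cut \<gamma> f g) (Cut y (ren \<gamma> y f) (ren \<gamma> y g))"
| alpha_split: "k < length cs \<Longrightarrow> y \<notin> chans f \<Longrightarrow> y \<notin> set cs \<Longrightarrow>
     step (Split \<alpha> cs f) (Split \<alpha> (cs[k := y]) (ren (cs ! k) y f))"
| alpha_fork: "k < length bs \<Longrightarrow> bs ! k = (c, L, f) \<Longrightarrow> y \<notin> chans f \<Longrightarrow>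
     step (Fork \<alpha> bs) (Fork \<alpha> (bs[k := (y, L, ren c y f)]))"
  \<comment> \<open>(1), (2): cuts with identities\<close>
| r1: "is_id Z \<gamma> \<delta> i \<Longrightarrow> \<delta> \<notin> chans f \<Longrightarrow> step (Cut \<gamma> f i) (ren \<gamma> \<delta> f)"
| r2: "is_id Z \<delta> \<gamma> i \<Longrightarrow> \<delta> \<notin> chans f \<Longrightarrow> step (Cut \<gamma> i f) (ren \<gamma> \<delta> f)"
  \<comment> \<open>(3)-(10): commuting cuts\<close>
| r3: "\<alpha> \<noteq> \<gamma> \<Longrightarrow> step (Cut \<gamma> (Case \<alpha> ps) g) (Case \<alpha> (map (\<lambda>(a, f). (a, Cut \<gamma> f g)) ps))"
| r4: "\<alpha> \<noteq> \<gamma> \<Longrightarrow> step (Cut \<gamma> g (Case \<alpha> ps)) (Case \<alpha> (map (\<lambda>(a, f). (a, Cut \<gamma> g f)) ps))"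
| r5: "\<alpha> \<noteq> \<gamma> \<Longrightarrow> step (Cut \<gamma> (Sel \<alpha> a f) g) (Sel \<alpha> a (Cut \<gamma> f g))"
| r6: "\<alpha> \<noteq> \<gamma> \<Longrightarrow> step (Cut \<gamma> g (Sel \<alpha> a f)) (Sel \<alpha> a (Cut \<gamma> g f))"
| r7: "\<alpha> \<noteq> \<gamma> \<Longrightarrow> \<gamma> \<notin> set cs \<Longrightarrow> set cs \<inter> chans g = {} \<Longrightarrow>
     step (Cut \<gamma> (Split \<alpha> cs f) g) (Split \<alpha> cs (Cut \<gamma> f g))"
| r8: "\<alpha> \<noteq> \<gamma> \<Longrightarrow> \<gamma> \<notin> set cs \<Longrightarrow> set cs \<inter> chans g = {} \<Longrightarrow>
     step (Cut \<gamma> g (Split \<alpha> cs f)) (Split \<alpha> cs (Cut \<gamma> g f))"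
| r9: "\<alpha> \<noteq> \<gamma> \<Longrightarrow> k < length bs \<Longrightarrow> bs ! k = (c, L, f) \<Longrightarrow> \<gamma> \<in> L \<Longrightarrow> c \<noteq> \<gamma> \<Longrightarrow> c \<notin> chans g \<Longrightarrow>
     step (Cut \<gamma> (Fork \<alpha> bs) g) (Fork \<alpha> (bs[k := (c, L', Cut \<gamma> f g)]))"
| r10: "\<alpha> \<noteq> \<gamma> \<Longrightarrow> k < length bs \<Longrightarrow> bs ! k = (c, L, f) \<Longrightarrow> \<gamma> \<in> L \<Longrightarrow> c \<noteq> \<gamma> \<Longrightarrow> c \<notin> chans g \<Longrightarrow>
     step (Cut \<gamma> g (Fork \<alpha> bs)) (Fork \<alpha> (bs[k := (c, L', Cut \<gamma> g f)]))"
  \<comment> \<open>(11)-(14): principal cuts\<close>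
| r11: "(a, g) \<in> set ps \<Longrightarrow> step (Cut \<gamma> (Sel \<gamma> a f) (Case \<gamma> ps)) (Cut \<gamma> f g)"
| r12: "(a, f) \<in> set ps \<Longrightarrow> step (Cut \<gamma> (Case \<gamma> ps) (Sel \<gamma> a g)) (Cut \<gamma> f g)"
| r13: "cs = map fst bs \<Longrightarrow>
     step (Cut \<gamma> (Fork \<gamma> bs) (Split \<gamma> cs g)) (foldl (\<lambda>acc b. Cut (fst b) (snd (snd b)) acc) g bs)"
| r14: "cs = map fst bs \<Longrightarrow>
     step (Cut \<gamma> (Split \<gamma> cs f) (Fork \<gamma> bs)) (foldl (\<lambda>acc b. Cut (fst b) acc (snd (snd b))) f bs)"
  \<comment> \<open>(15)-(24): permuting conversions of two rules on distinct channels\<close>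
| p_case_case: "\<alpha> \<noteq> \<beta> \<Longrightarrow>
     step (Case \<alpha> (map (\<lambda>i. (as ! i, Case \<beta> (map (\<lambda>j. (bs ! j, F i j)) [0..<length bs]))) [0..<length as]))
          (Case \<beta> (map (\<lambda>j. (bs ! j, Case \<alpha> (map (\<lambda>i. (as ! i, F i j)) [0..<length as]))) [0..<length bs]))"
| p_case_sel: "\<alpha> \<noteq> \<beta> \<Longrightarrow>
     step (Case \<alpha> (map (\<lambda>(a, f). (a, Sel \<beta> b f)) ps)) (Sel \<beta> b (Case \<alpha> ps))"
| p_case_split: "\<alpha> \<noteq> \<beta> \<Longrightarrow> \<alpha> \<notin> set cs \<Longrightarrow>
     step (Case \<alpha> (map (\<lambda>(a, f). (a, Split \<beta> cs f)) ps)) (Split \<beta> cs (Case \<alpha> ps))"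
| p_case_fork: "\<alpha> \<noteq> \<beta> \<Longrightarrow> k < length bs \<Longrightarrow> \<alpha> \<noteq> c \<Longrightarrow>
     step (Case \<alpha> (map (\<lambda>(a, f). (a, Fork \<beta> (bs[k := (c, L, f)]))) ps))
          (Fork \<beta> (bs[k := (c, L, Case \<alpha> ps)]))"
| p_sel_sel: "\<alpha> \<noteq> \<beta> \<Longrightarrow> step (Sel \<alpha> a (Sel \<beta> b f)) (Sel \<beta> b (Sel \<alpha> a f))"
| p_sel_split: "\<alpha> \<noteq> \<beta> \<Longrightarrow> \<alpha> \<notin> set cs \<Longrightarrow> step (Sel \<alpha> a (Split \<beta> cs f)) (Split \<beta> cs (Sel \<alpha> a f))"
| p_sel_fork: "\<alpha> \<noteq> \<beta> \<Longrightarrow> k < length bs \<Longrightarrow> \<alpha> \<noteq> c \<Longrightarrow>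
     step (Sel \<alpha> a (Fork \<beta> (bs[k := (c, L, f)]))) (Fork \<beta> (bs[k := (c, L, Sel \<alpha> a f)]))"
| p_split_split: "\<alpha> \<noteq> \<beta> \<Longrightarrow> \<alpha> \<notin> set ds \<Longrightarrow> \<beta> \<notin> set cs \<Longrightarrow> set cs \<inter> set ds = {} \<Longrightarrow>
     step (Split \<alpha> cs (Split \<beta> ds f)) (Split \<beta> ds (Split \<alpha> cs f))"
| p_split_fork: "\<alpha> \<noteq> \<beta> \<Longrightarrow> k < length bs \<Longrightarrow> \<alpha> \<noteq> c \<Longrightarrow> c \<notin> set cs \<Longrightarrow> \<beta> \<notin> set cs \<Longrightarrow>
     step (Split \<alpha> cs (Fork \<beta> (bs[k := (c, L, f)]))) (Fork \<beta> (bs[k := (c, L', Split \<alpha> cs f)]))"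
| p_fork_fork: "\<alpha> \<noteq> \<beta> \<Longrightarrow> k < length as \<Longrightarrow> l < length bs \<Longrightarrow> a \<noteq> \<beta> \<Longrightarrow> b \<noteq> \<alpha> \<Longrightarrow> a \<noteq> b \<Longrightarrow>
     step (Fork \<alpha> (as[k := (a, L, Fork \<beta> (bs[l := (b, M, g)]))]))
          (Fork \<beta> (bs[l := (b, M', Fork \<alpha> (as[k := (a, L', g)]))]))"

inductive cstep :: "('a, 'm, 'e, 'c) tm \<Rightarrow> ('a, 'm, 'e, 'c) tm \<Rightarrow> bool" where
  "step t u \<Longrightarrow> cstep t u"
| "cstep f f' \<Longrightarrow> k < length ps \<Longrightarrow> ps ! k = (a, f) \<Longrightarrow> cstep (Case \<alpha> ps) (Case \<alpha> (ps[k := (a, f')]))"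
| "cstep f f' \<Longrightarrow> cstep (Sel \<alpha> a f) (Sel \<alpha> a f')"
| "cstep f f' \<Longrightarrow> cstep (Split \<alpha> cs f) (Split \<alpha> cs f')"
| "cstep f f' \<Longrightarrow> k < length bs \<Longrightarrow> bs ! k = (c, L, f) \<Longrightarrow> cstep (Fork \<alpha> bs) (Fork \<alpha> (bs[k := (c, L, f')]))"
| "cstep f f' \<Longrightarrow> cstep (Cut \<gamma> f g) (Cut \<gamma> f' g)"
| "cstep g g' \<Longrightarrow> cstep (Cut \<gamma> f g) (Cut \<gamma> f g')"

section \<open>The polycategory CProc(A): hom-sets of \<sim>-classes\<close>

text \<open>\<sim> on terms of type \<Gamma> \<turnstile> \<Delta>: the equivalence relation generated by the
  (context-closed) steps, applied whenever both sides are well typed of type \<Gamma> \<turnstile> \<Delta>.\<close>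
definition conv1 :: "('m \<Rightarrow> 'a list) \<Rightarrow> ('m \<Rightarrow> 'a list) \<Rightarrow> ('c, 'a, 'e) side \<Rightarrow> ('c, 'a, 'e) side
     \<Rightarrow> ('a, 'm, 'e, 'c) tm \<Rightarrow> ('a, 'm, 'e, 'c) tm \<Rightarrow> bool" where
  "conv1 src tgt \<Gamma> \<Delta> t u \<longleftrightarrow> tp src tgt t \<Gamma> \<Delta> \<and> tp src tgt u \<Gamma> \<Delta> \<and> (cstep t u \<or> cstep u t)"

definition sim :: "('m \<Rightarrow> 'a list) \<Rightarrow> ('m \<Rightarrow> 'a list) \<Rightarrow> ('c, 'a, 'e) side \<Rightarrow> ('c, 'a, 'e) side
     \<Rightarrow> ('a, 'm, 'e, 'c) tm \<Rightarrow> ('a, 'm, 'e, 'c) tm \<Rightarrow> bool" where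
  "sim src tgt \<Gamma> \<Delta> t u \<longleftrightarrow> tp src tgt t \<Gamma> \<Delta> \<and> (conv1 src tgt \<Gamma> \<Delta>)\<^sup>*\<^sup>* t u"

definition cls :: "('m \<Rightarrow> 'a list) \<Rightarrow> ('m \<Rightarrow> 'a list) \<Rightarrow> ('c, 'a, 'e) side \<Rightarrow> ('c, 'a, 'e) side
     \<Rightarrow> ('a, 'm, 'e, 'c) tm \<Rightarrow> ('a, 'm, 'e, 'c) tm set" where
  "cls src tgt \<Gamma> \<Delta> t = {u. sim src tgt \<Gamma> \<Delta> t u}"

definition hom :: "('m \<Rightarrow> 'a list) \<Rightarrow> ('m \<Rightarrow> 'a list) \<Rightarrow> ('c, 'a, 'e) side \<Rightarrow> ('c, 'a, 'e) side
     \<Rightarrow> ('a, 'm, 'e, 'c) tm set set" where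
  "hom src tgt \<Gamma> \<Delta> = cls src tgt \<Gamma> \<Delta> ` {t. tp src tgt t \<Gamma> \<Delta>}"

text \<open>S is a poly-sum of the family Xs: a bijection, for all \<Gamma>, \<Delta> and (fresh) \<alpha>,
  between families {f_i : \<Gamma>, \<alpha>:X_i \<rightarrow> \<Delta>}_i and maps \<Gamma>, \<alpha>:S \<rightarrow> \<Delta>, natural in
  cuts (composition) along a channel \<gamma> \<noteq> \<alpha> on either side.\<close>
definition is_poly_sum :: "'c itself \<Rightarrow> ('m \<Rightarrow> 'a list) \<Rightarrow> ('m \<Rightarrow> 'a list)
     \<Rightarrow> ('a, 'e) fm \<Rightarrow> ('a, 'e) fm list \<Rightarrow> bool" where
  "is_poly_sum (_ :: 'c itself) src tgt S Xs \<longleftrightarrow>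
   (\<exists>\<Phi> :: ('c, 'a, 'e) side \<Rightarrow> ('c, 'a, 'e) side \<Rightarrow> 'c \<Rightarrow> (nat \<Rightarrow> ('a, 'm, 'e, 'c) tm set)
            \<Rightarrow> ('a, 'm, 'e, 'c) tm set.
     (\<forall>\<Gamma> \<Delta> \<alpha>. seq_ok (\<Gamma>(\<alpha> \<mapsto> S)) \<Delta> \<and> \<alpha> \<notin> dom \<Gamma> \<longrightarrow>
        bij_betw (\<Phi> \<Gamma> \<Delta> \<alpha>)
          (Pi\<^sub>E {..<length Xs} (\<lambda>i. hom src tgt (\<Gamma>(\<alpha> \<mapsto> Xs ! i)) \<Delta>))
          (hom src tgt (\<Gamma>(\<alpha> \<mapsto> S)) \<Delta>)) \<and>
     \<comment> \<open>h ;_\<gamma> \<alpha>{f_i}_i = \<alpha>{h ;_\<gamma> f_i}_i\<close>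
     (\<forall>\<Gamma> \<Delta> \<alpha> \<Gamma>0 \<Delta>0 \<gamma> Z h fs t.
        seq_ok (\<Gamma>(\<alpha> \<mapsto> S)) \<Delta> \<and> \<alpha> \<notin> dom \<Gamma> \<and> \<gamma> \<noteq> \<alpha> \<and> \<Gamma> \<gamma> = Some Z \<and>
        tp src tgt h \<Gamma>0 (\<Delta>0(\<gamma> \<mapsto> Z)) \<and> \<gamma> \<notin> dom \<Gamma>0 \<union> dom \<Delta>0 \<and>
        (dom \<Gamma>0 \<union> dom \<Delta>0) \<inter> (dom \<Gamma> \<union> dom \<Delta> \<union> {\<alpha>}) = {} \<and>
        (\<forall>i < length Xs. tp src tgt (fs i) (\<Gamma>(\<alpha> \<mapsto> Xs ! i)) \<Delta>) \<and>
        t \<in> \<Phi> \<Gamma> \<Delta> \<alpha> (\<lambda>i\<in>{..<length Xs}. cls src tgt (\<Gamma>(\<alpha> \<mapsto> Xs ! i)) \<Delta> (fs i))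
      \<longrightarrow> cls src tgt ((\<Gamma>0 ++ \<Gamma>(\<gamma> := None))(\<alpha> \<mapsto> S)) (\<Delta>0 ++ \<Delta>) (Cut \<gamma> h t)
          = \<Phi> (\<Gamma>0 ++ \<Gamma>(\<gamma> := None)) (\<Delta>0 ++ \<Delta>) \<alpha>
              (\<lambda>i\<in>{..<length Xs}. cls src tgt ((\<Gamma>0 ++ \<Gamma>(\<gamma> := None))(\<alpha> \<mapsto> Xs ! i)) (\<Delta>0 ++ \<Delta>)
                                    (Cut \<gamma> h (fs i)))) \<and>
     \<comment> \<open>\<alpha>{f_i}_i ;_\<gamma> h = \<alpha>{f_i ;_\<gamma> h}_i\<close>
     (\<forall>\<Gamma> \<Delta> \<alpha> \<Gamma>0 \<Delta>0 \<gamma> Z h fs t.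
        seq_ok (\<Gamma>(\<alpha> \<mapsto> S)) \<Delta> \<and> \<alpha> \<notin> dom \<Gamma> \<and> \<gamma> \<noteq> \<alpha> \<and> \<Delta> \<gamma> = Some Z \<and>
        tp src tgt h (\<Gamma>0(\<gamma> \<mapsto> Z)) \<Delta>0 \<and> \<gamma> \<notin> dom \<Gamma>0 \<union> dom \<Delta>0 \<and>
        (dom \<Gamma>0 \<union> dom \<Delta>0) \<inter> (dom \<Gamma> \<union> dom \<Delta> \<union> {\<alpha>}) = {} \<and>
        (\<forall>i < length Xs. tp src tgt (fs i) (\<Gamma>(\<alpha> \<mapsto> Xs ! i)) \<Delta>) \<and>
        t \<in> \<Phi> \<Gamma> \<Delta> \<alpha> (\<lambda>i\<in>{..<length Xs}. cls src tgt (\<Gamma>(\<alpha> \<mapsto> Xs ! i)) \<Delta> (fs i))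
      \<longrightarrow> cls src tgt ((\<Gamma> ++ \<Gamma>0)(\<alpha> \<mapsto> S)) (\<Delta>(\<gamma> := None) ++ \<Delta>0) (Cut \<gamma> t h)
          = \<Phi> (\<Gamma> ++ \<Gamma>0) (\<Delta>(\<gamma> := None) ++ \<Delta>0) \<alpha>
              (\<lambda>i\<in>{..<length Xs}. cls src tgt ((\<Gamma> ++ \<Gamma>0)(\<alpha> \<mapsto> Xs ! i)) (\<Delta>(\<gamma> := None) ++ \<Delta>0)
                                    (Cut \<gamma> (fs i) h))))"

text \<open>The dual notion: S is a poly-product of Xs (families {f_i : \<Gamma> \<rightarrow> \<alpha>:X_i, \<Delta>}_i
  correspond naturally to maps \<Gamma> \<rightarrow> \<alpha>:S, \<Delta>).\<close>
definition is_poly_product :: "'c itself \<Rightarrow> ('m \<Rightarrow> 'a list) \<Rightarrow> ('m \<Rightarrow> 'a list)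
     \<Rightarrow> ('a, 'e) fm \<Rightarrow> ('a, 'e) fm list \<Rightarrow> bool" where
  "is_poly_product (_ :: 'c itself) src tgt S Xs \<longleftrightarrow>
   (\<exists>\<Phi> :: ('c, 'a, 'e) side \<Rightarrow> ('c, 'a, 'e) side \<Rightarrow> 'c \<Rightarrow> (nat \<Rightarrow> ('a, 'm, 'e, 'c) tm set)
            \<Rightarrow> ('a, 'm, 'e, 'c) tm set.
     (\<forall>\<Gamma> \<Delta> \<alpha>. seq_ok \<Gamma> (\<Delta>(\<alpha> \<mapsto> S)) \<and> \<alpha> \<notin> dom \<Delta> \<longrightarrow>
        bij_betw (\<Phi> \<Gamma> \<Delta> \<alpha>)
          (Pi\<^sub>E {..<length Xs} (\<lambda>i. hom src tgt \<Gamma> (\<Delta>(\<alpha> \<mapsto> Xs ! i))))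
          (hom src tgt \<Gamma> (\<Delta>(\<alpha> \<mapsto> S)))) \<and>
     \<comment> \<open>h ;_\<gamma> \<alpha>{f_i}_i = \<alpha>{h ;_\<gamma> f_i}_i\<close>
     (\<forall>\<Gamma> \<Delta> \<alpha> \<Gamma>0 \<Delta>0 \<gamma> Z h fs t.
        seq_ok \<Gamma> (\<Delta>(\<alpha> \<mapsto> S)) \<and> \<alpha> \<notin> dom \<Delta> \<and> \<gamma> \<noteq> \<alpha> \<and> \<Gamma> \<gamma> = Some Z \<and>
        tp src tgt h \<Gamma>0 (\<Delta>0(\<gamma> \<mapsto> Z)) \<and> \<gamma> \<notin> dom \<Gamma>0 \<union> dom \<Delta>0 \<and>
        (dom \<Gamma>0 \<union> dom \<Delta>0) \<inter> (dom \<Gamma> \<union> dom \<Delta> \<union> {\<alpha>}) = {} \<and>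
        (\<forall>i < length Xs. tp src tgt (fs i) \<Gamma> (\<Delta>(\<alpha> \<mapsto> Xs ! i))) \<and>
        t \<in> \<Phi> \<Gamma> \<Delta> \<alpha> (\<lambda>i\<in>{..<length Xs}. cls src tgt \<Gamma> (\<Delta>(\<alpha> \<mapsto> Xs ! i)) (fs i))
      \<longrightarrow> cls src tgt (\<Gamma>0 ++ \<Gamma>(\<gamma> := None)) ((\<Delta>0 ++ \<Delta>)(\<alpha> \<mapsto> S)) (Cut \<gamma> h t)
          = \<Phi> (\<Gamma>0 ++ \<Gamma>(\<gamma> := None)) (\<Delta>0 ++ \<Delta>) \<alpha>
              (\<lambda>i\<in>{..<length Xs}. cls src tgt (\<Gamma>0 ++ \<Gamma>(\<gamma> := None)) ((\<Delta>0 ++ \<Delta>)(\<alpha> \<mapsto> Xs ! i))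
                                    (Cut \<gamma> h (fs i)))) \<and>
     \<comment> \<open>\<alpha>{f_i}_i ;_\<gamma> h = \<alpha>{f_i ;_\<gamma> h}_i\<close>
     (\<forall>\<Gamma> \<Delta> \<alpha> \<Gamma>0 \<Delta>0 \<gamma> Z h fs t.
        seq_ok \<Gamma> (\<Delta>(\<alpha> \<mapsto> S)) \<and> \<alpha> \<notin> dom \<Delta> \<and> \<gamma> \<noteq> \<alpha> \<and> \<Delta> \<gamma> = Some Z \<and>
        tp src tgt h (\<Gamma>0(\<gamma> \<mapsto> Z)) \<Delta>0 \<and> \<gamma> \<notin> dom \<Gamma>0 \<union> dom \<Delta>0 \<and>
        (dom \<Gamma>0 \<union> dom \<Delta>0) \<inter> (dom \<Gamma> \<union> dom \<Delta> \<union> {\<alpha>}) = {} \<and>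
        (\<forall>i < length Xs. tp src tgt (fs i) \<Gamma> (\<Delta>(\<alpha> \<mapsto> Xs ! i))) \<and>
        t \<in> \<Phi> \<Gamma> \<Delta> \<alpha> (\<lambda>i\<in>{..<length Xs}. cls src tgt \<Gamma> (\<Delta>(\<alpha> \<mapsto> Xs ! i)) (fs i))
      \<longrightarrow> cls src tgt (\<Gamma> ++ \<Gamma>0) ((\<Delta>(\<gamma> := None) ++ \<Delta>0)(\<alpha> \<mapsto> S)) (Cut \<gamma> t h)
          = \<Phi> (\<Gamma> ++ \<Gamma>0) (\<Delta>(\<gamma> := None) ++ \<Delta>0) \<alpha>
              (\<lambda>i\<in>{..<length Xs}. cls src tgt (\<Gamma> ++ \<Gamma>0) ((\<Delta>(\<gamma> := None) ++ \<Delta>0)(\<alpha> \<mapsto> Xs ! i))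
                                    (Cut \<gamma> (fs i) h))))"

end

(* The poly-sum structure of \<Sum>\<^sub>i a\<^sub>i:X\<^sub>i is witnessed by the cotuple map sending a family
   {f\<^sub>i}\<^sub>i of classes to the class of \<alpha>{a\<^sub>i \<mapsto> f\<^sub>i}\<^sub>i. It is surjective by eta-expansion: a term
   t : \<Gamma>, \<alpha>:\<Sum>X \<turnstile> \<Delta> is cut against the identity on the sum, which is itself a cotuple of
   injections, so rule (3) pushes the cut into the branches and rule (2) removes it again. It
   is injective because precomposing with the i-th injection and reducing with (11) and (2)
   recovers f\<^sub>i up to a renaming of \<alpha>, which a second identity cut undoes. Naturality is one
   commuting conversion (3) or (4). Products are dual. *)

theory Submission
  imports Defs "HOL-Combinatorics.Transposition"
begin

section \<open>Renaming channels\<close>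

fun map_chans :: "('c \<Rightarrow> 'c) \<Rightarrow> ('a, 'm, 'e, 'c) tm \<Rightarrow> ('a, 'm, 'e, 'c) tm" where
  "map_chans s (Eq \<alpha> A \<beta>) = Eq (s \<alpha>) A (s \<beta>)"
| "map_chans s (Ax m ins outs) = Ax m (map s ins) (map s outs)"
| "map_chans s (Case \<alpha> ps) = Case (s \<alpha>) (map (\<lambda>p. (fst p, map_chans s (snd p))) ps)"
| "map_chans s (Sel \<alpha> a f) = Sel (s \<alpha>) a (map_chans s f)"
| "map_chans s (Split \<alpha> cs f) = Split (s \<alpha>) (map s cs) (map_chans s f)"
| "map_chans s (Fork \<alpha> bs) =
     Fork (s \<alpha>) (map (\<lambda>b. (s (fst b), s ` fst (snd b), map_chans s (snd (snd b)))) bs)"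
| "map_chans s (Cut \<gamma> f g) = Cut (s \<gamma>) (map_chans s f) (map_chans s g)"

lemma ren_eq_map_chans: "ren x y t = map_chans (\<lambda>c. if c = x then y else c) t"
  by (induction x y t rule: ren.induct) auto

lemma map_chans_cong: "(\<And>c. c \<in> chans t \<Longrightarrow> s c = s' c) \<Longrightarrow> map_chans s t = map_chans s' t"
  by (induction s t rule: map_chans.induct) (fastforce intro!: image_cong)+

lemma map_chans_comp: "map_chans s (map_chans s' t) = map_chans (s \<circ> s') t"
  by (induction s' t rule: map_chans.induct) (auto simp: image_image)

lemma map_chans_id: "map_chans id t = t"
  by (induction t) (auto intro: map_idI)

lemma chans_map_chans: "chans (map_chans s t) = s ` chans t"
  by (induction s t rule: map_chans.induct) (auto simp: image_Union image_UN)

lemma ren_eq_transpose: "y \<notin> chans t \<Longrightarrow> ren x y t = map_chans (transpose x y) t"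
  unfolding ren_eq_map_chans by (rule map_chans_cong) (auto simp: transpose_def)

lemma ren_ren: "y \<notin> chans t \<Longrightarrow> ren y x (ren x y t) = t"
  unfolding ren_eq_map_chans map_chans_comp
  by (subst (2) map_chans_id[symmetric], rule map_chans_cong) auto

lemma notin_chans_ren: "x \<noteq> y \<Longrightarrow> x \<notin> chans (ren x y t)"
  unfolding ren_eq_map_chans chans_map_chans by auto

lemma seq_ok_iff:
  "seq_ok \<Gamma> \<Delta> \<longleftrightarrow> finite (dom \<Gamma>) \<and> finite (dom \<Delta>) \<and> dom \<Gamma> \<inter> dom \<Delta> = {} \<and>
     (\<forall>c X. \<Gamma> c = Some X \<or> \<Delta> c = Some X \<longrightarrow> wf_fm X)"
  unfolding seq_ok_def ran_def by blast

lemma map_of_zip_SomeD: "length ks = length vs \<Longrightarrow> map_of (zip ks vs) c = Some v \<Longrightarrow> v \<in> set vs"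
  by (metis in_set_zipE map_of_SomeD)

lemma tp_seq_ok: "tp src tgt t \<Gamma> \<Delta> \<Longrightarrow> seq_ok \<Gamma> \<Delta>"
proof (induction rule: tp.induct)
  case (eq \<alpha> \<beta> A)
  then show ?case unfolding seq_ok_def by (simp add: wf_fm.intros)
next
  case (ax ins outs m)
  then show ?case
    by (auto simp: seq_ok_def ran_map_of_zip wf_fm.intros)
next
  case (cut f \<Gamma> \<Delta> \<gamma> Z g \<Gamma>' \<Delta>')
  then show ?case
    unfolding seq_ok_iff by (auto simp: map_add_Some_iff split: if_splits)
qed blast+

lemma tp_finite_chans: "tp src tgt t \<Gamma> \<Delta> \<Longrightarrow> finite (chans t)"
proof (induction rule: tp.induct)
  case (lpar Gs \<alpha> Xs Ds bs)
  have "finite (fst (snd b)) \<and> finite (chans (snd (snd b)))" if "b \<in> set bs" for b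
  proof -
    obtain i where i: "i < length bs" "b = bs ! i" using \<open>b \<in> set bs\<close> by (auto simp: in_set_conv_nth)
    then have "seq_ok ((Gs ! i)(fst (bs ! i) \<mapsto> Xs ! i)) (Ds ! i)"
      using lpar.IH tp_seq_ok by blast
    then show ?thesis using lpar.IH i by (simp add: seq_ok_def)
  qed
  then show ?case by simp
next
  case (rtensor Gs Ds \<alpha> Xs bs)
  have "finite (fst (snd b)) \<and> finite (chans (snd (snd b)))" if "b \<in> set bs" for b
  proof -
    obtain i where i: "i < length bs" "b = bs ! i" using \<open>b \<in> set bs\<close> by (auto simp: in_set_conv_nth)
    then have "seq_ok (Gs ! i) ((Ds ! i)(fst (bs ! i) \<mapsto> Xs ! i))"
      using rtensor.IH tp_seq_ok by blast
    then show ?thesis using rtensor.IH i by (simp add: seq_ok_def)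
  qed
  then show ?case by simp
qed (auto simp: in_set_conv_nth, (metis snd_conv)+)

lemma joinall_comp: "joinall Gs \<circ> s = joinall (map (\<lambda>G. G \<circ> s) Gs)"
  by (induction Gs) (auto simp: joinall_def map_add_def fun_eq_iff)

lemma map_add_comp: "(G ++ H) \<circ> s = (G \<circ> s) ++ (H \<circ> s)"
  by (rule ext) (simp add: map_add_def split: option.split)

lemma fst_comp_apsnd: "fst \<circ> (\<lambda>p. (fst p, f (snd p))) = fst"
  by auto

context
  fixes s :: "'c \<Rightarrow> 'c"
  assumes involutive: "\<And>c. s (s c) = c"
begin

lemma inj_involution: "inj s"
  by (metis injI involutive)

lemma involution_eq_iff: "s c = a \<longleftrightarrow> c = s a"
  by (metis involutive)

lemma fun_upd_comp_involution: "\<Gamma>(a \<mapsto> v) \<circ> s = (\<Gamma> \<circ> s)(s a \<mapsto> v)"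
  by (rule ext) (simp add: involution_eq_iff)

lemma singleton_comp_involution: "[a \<mapsto> v] \<circ> s = [s a \<mapsto> v]"
  by (rule ext) (simp add: involution_eq_iff)

lemma dom_comp_involution: "dom (\<Gamma> \<circ> s) = s ` dom \<Gamma>"
  by (auto simp: dom_def image_iff) (metis involutive)+

lemma map_of_zip_comp_involution: "map_of (zip ks vs) \<circ> s = map_of (zip (map s ks) vs)"
proof
  show "(map_of (zip ks vs) \<circ> s) c = map_of (zip (map s ks) vs) c" for c
    by (induction ks arbitrary: vs) (simp, case_tac vs, auto simp: involution_eq_iff)
qed

lemma seq_ok_comp_involution: "seq_ok \<Gamma> \<Delta> \<Longrightarrow> seq_ok (\<Gamma> \<circ> s) (\<Delta> \<circ> s)"
  unfolding seq_ok_iff dom_comp_involution by (auto simp: image_Int[OF inj_involution, symmetric])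

lemmas comp_involution_simps =
  dom_comp_involution fun_upd_comp_involution map_add_comp map_of_zip_comp_involution
  joinall_comp[symmetric] image_Un[symmetric] image_Int[OF inj_involution, symmetric]
  inj_image_mem_iff[OF inj_involution] distinct_map inj_on_subset[OF inj_involution] fst_comp_apsnd

lemma tp_map_chans_involution:
  "tp src tgt t \<Gamma> \<Delta> \<Longrightarrow> tp src tgt (map_chans s t) (\<Gamma> \<circ> s) (\<Delta> \<circ> s)"
proof (induction rule: tp.induct)
  txt \<open>Below, \<open>fun_upd_apply\<close> and \<open>comp_apply\<close> are removed from the simpset: with them the
    simplifier eta-expands the sides \<open>\<Gamma> \<circ> s\<close> and they no longer match the induction hypotheses.\<close>
  case (eq \<alpha> \<beta> A)
  then show ?case
    unfolding singleton_comp_involution map_chans.simps by (metis tp.eq involutive)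
next
  case (ax ins outs m)
  then show ?case
    by (auto simp: map_of_zip_comp_involution distinct_map involution_eq_iff involutive
             intro!: tp.ax inj_on_subset[OF inj_involution]) blast
next
  case (cotuple \<Gamma> \<alpha> qs \<Delta> ps)
  then show ?case
    using seq_ok_comp_involution[OF cotuple.hyps(1)]
    by (simp only: map_chans.simps fun_upd_comp_involution, intro tp.cotuple)
       (simp_all add: comp_involution_simps del: fun_upd_apply comp_apply)
next
  case (tuple \<Gamma> \<Delta> \<alpha> qs ps)
  then show ?case
    using seq_ok_comp_involution[OF tuple.hyps(1)]
    by (simp only: map_chans.simps fun_upd_comp_involution, intro tp.tuple)
       (simp_all add: comp_involution_simps del: fun_upd_apply comp_apply)
next
  case (proj \<Gamma> \<alpha> qs \<Delta> a X f)
  then show ?case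
    using seq_ok_comp_involution[OF proj.hyps(1)]
    by (simp only: map_chans.simps fun_upd_comp_involution, intro tp.proj)
       (simp_all add: comp_involution_simps del: fun_upd_apply comp_apply)
next
  case (inj \<Gamma> \<Delta> \<alpha> qs a X f)
  then show ?case
    using seq_ok_comp_involution[OF inj.hyps(1)]
    by (simp only: map_chans.simps fun_upd_comp_involution, intro tp.inj)
       (simp_all add: comp_involution_simps del: fun_upd_apply comp_apply)
next
  case (ltensor \<Gamma> \<alpha> Xs \<Delta> cs f)
  then show ?case
    using seq_ok_comp_involution[OF ltensor.hyps(1)]
    by (simp only: map_chans.simps fun_upd_comp_involution, intro tp.ltensor)
       (simp_all add: comp_involution_simps del: fun_upd_apply comp_apply)
next
  case (rpar \<Gamma> \<Delta> \<alpha> Xs cs f)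
  then show ?case
    using seq_ok_comp_involution[OF rpar.hyps(1)]
    by (simp only: map_chans.simps fun_upd_comp_involution, intro tp.rpar)
       (simp_all add: comp_involution_simps del: fun_upd_apply comp_apply)
next
  case (lpar Gs \<alpha> Xs Ds bs)
  then show ?case
    using seq_ok_comp_involution[OF lpar.hyps(1)]
    by (simp only: map_chans.simps fun_upd_comp_involution joinall_comp, intro tp.lpar)
       (simp_all add: comp_involution_simps del: fun_upd_apply comp_apply)
next
  case (rtensor Gs Ds \<alpha> Xs bs)
  then show ?case
    using seq_ok_comp_involution[OF rtensor.hyps(1)]
    by (simp only: map_chans.simps fun_upd_comp_involution joinall_comp, intro tp.rtensor)
       (simp_all add: comp_involution_simps del: fun_upd_apply comp_apply)
next
  case (cut f \<Gamma> \<Delta> \<gamma> Z g \<Gamma>' \<Delta>')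
  then show ?case
    by (simp only: map_chans.simps map_add_comp, intro tp.cut)
       (simp_all add: comp_involution_simps del: fun_upd_apply comp_apply)
qed

end

lemma comp_transpose_fresh: "x \<notin> dom \<Gamma> \<Longrightarrow> y \<notin> dom \<Gamma> \<Longrightarrow> \<Gamma> \<circ> transpose x y = \<Gamma>"
  by (rule ext) (auto simp: transpose_def)

lemma fun_upd_comp_transpose_fresh:
  "x \<notin> dom \<Gamma> \<Longrightarrow> y \<notin> dom \<Gamma> \<Longrightarrow> \<Gamma>(x \<mapsto> X) \<circ> transpose x y = \<Gamma>(y \<mapsto> X)"
  by (rule ext) (auto simp: transpose_def)

lemma tp_ren:
  assumes "tp src tgt t \<Gamma> \<Delta>" and "y \<notin> chans t"
  shows "tp src tgt (ren x y t) (\<Gamma> \<circ> transpose x y) (\<Delta> \<circ> transpose x y)"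
  using tp_map_chans_involution[where s = "transpose x y", OF transpose_involutory assms(1)] assms(2)
  by (simp add: ren_eq_transpose)

lemma tp_ren_left:
  assumes "tp src tgt t (\<Gamma>(x \<mapsto> X)) \<Delta>" and "y \<notin> chans t"
    and "x \<notin> dom \<Gamma> \<union> dom \<Delta>" and "y \<notin> dom \<Gamma> \<union> dom \<Delta>"
  shows "tp src tgt (ren x y t) (\<Gamma>(y \<mapsto> X)) \<Delta>"
  using tp_ren[OF assms(1,2), of x] assms(3,4)
  by (simp add: fun_upd_comp_transpose_fresh comp_transpose_fresh)

lemma tp_ren_right:
  assumes "tp src tgt t \<Gamma> (\<Delta>(x \<mapsto> X))" and "y \<notin> chans t"
    and "x \<notin> dom \<Gamma> \<union> dom \<Delta>" and "y \<notin> dom \<Gamma> \<union> dom \<Delta>"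
  shows "tp src tgt (ren x y t) \<Gamma> (\<Delta>(y \<mapsto> X))"
  using tp_ren[OF assms(1,2), of x] assms(3,4)
  by (simp add: fun_upd_comp_transpose_fresh comp_transpose_fresh)

section \<open>Cotuples, tuples and identity terms\<close>

lemma wf_fm_Sum_iff: "wf_fm (Sum qs) \<longleftrightarrow> distinct (map fst qs) \<and> (\<forall>p\<in>set qs. wf_fm (snd p))"
  by (auto elim: wf_fm.cases intro: wf_fm.intros)

lemma wf_fm_Prod_iff: "wf_fm (Prod qs) \<longleftrightarrow> distinct (map fst qs) \<and> (\<forall>p\<in>set qs. wf_fm (snd p))"
  by (auto elim: wf_fm.cases intro: wf_fm.intros)

lemma seq_ok_singletons: "\<alpha> \<noteq> \<beta> \<Longrightarrow> wf_fm X \<Longrightarrow> wf_fm Y \<Longrightarrow> seq_ok [\<alpha> \<mapsto> X] [\<beta> \<mapsto> Y]"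
  unfolding seq_ok_def by simp

lemma seq_ok_update_left:
  "seq_ok (\<Gamma>(\<alpha> \<mapsto> X)) \<Delta> \<Longrightarrow> wf_fm Y \<Longrightarrow> seq_ok (\<Gamma>(\<alpha> \<mapsto> Y)) \<Delta>"
  unfolding seq_ok_iff by (auto split: if_splits)

lemma seq_ok_update_right:
  "seq_ok \<Gamma> (\<Delta>(\<alpha> \<mapsto> X)) \<Longrightarrow> wf_fm Y \<Longrightarrow> seq_ok \<Gamma> (\<Delta>(\<alpha> \<mapsto> Y))"
  unfolding seq_ok_iff by (auto split: if_splits)

lemma seq_ok_wf_left: "seq_ok (\<Gamma>(\<alpha> \<mapsto> X)) \<Delta> \<Longrightarrow> wf_fm X"
  unfolding seq_ok_iff by (metis fun_upd_same)

lemma seq_ok_wf_right: "seq_ok \<Gamma> (\<Delta>(\<alpha> \<mapsto> X)) \<Longrightarrow> wf_fm X"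
  unfolding seq_ok_iff by (metis fun_upd_same)

lemma seq_ok_update_leftD:
  "seq_ok (\<Gamma>(\<alpha> \<mapsto> X)) \<Delta> \<Longrightarrow> \<alpha> \<notin> dom \<Delta> \<and> finite (dom \<Gamma>) \<and> finite (dom \<Delta>)"
  unfolding seq_ok_def by auto

lemma seq_ok_update_rightD:
  "seq_ok \<Gamma> (\<Delta>(\<alpha> \<mapsto> X)) \<Longrightarrow> \<alpha> \<notin> dom \<Gamma> \<and> finite (dom \<Gamma>) \<and> finite (dom \<Delta>)"
  unfolding seq_ok_def by auto

text \<open>The term \<open>\<alpha>{a\<^sub>i \<mapsto> f\<^sub>i}\<^sub>i\<close> of the paper, indexed by the positions of \<open>qs\<close>.\<close>

definition case_family :: "'c \<Rightarrow> ('e \<times> ('a, 'e) fm) list \<Rightarrow> (nat \<Rightarrow> ('a, 'm, 'e, 'c) tm)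
    \<Rightarrow> ('a, 'm, 'e, 'c) tm" where
  "case_family \<alpha> qs fs = Case \<alpha> (map (\<lambda>i. (fst (qs ! i), fs i)) [0..<length qs])"

lemma map_fst_case_family: "map fst (map (\<lambda>i. (fst (qs ! i), fs i)) [0..<length qs]) = map fst qs"
  by (rule nth_equalityI) auto

lemma tp_case_family_Sum:
  assumes "seq_ok (\<Gamma>(\<alpha> \<mapsto> Sum qs)) \<Delta>" and "\<alpha> \<notin> dom \<Gamma>"
    and "\<And>i. i < length qs \<Longrightarrow> tp src tgt (fs i) (\<Gamma>(\<alpha> \<mapsto> snd (qs ! i))) \<Delta>"
  shows "tp src tgt (case_family \<alpha> qs fs) (\<Gamma>(\<alpha> \<mapsto> Sum qs)) \<Delta>"
  unfolding case_family_def
  using assms seq_ok_wf_left[OF assms(1)]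
  by (intro tp.cotuple) (auto simp: wf_fm_Sum_iff map_fst_case_family simp del: map_map)

lemma tp_case_family_Prod:
  assumes "seq_ok \<Gamma> (\<Delta>(\<alpha> \<mapsto> Prod qs))" and "\<alpha> \<notin> dom \<Delta>"
    and "\<And>i. i < length qs \<Longrightarrow> tp src tgt (fs i) \<Gamma> (\<Delta>(\<alpha> \<mapsto> snd (qs ! i)))"
  shows "tp src tgt (case_family \<alpha> qs fs) \<Gamma> (\<Delta>(\<alpha> \<mapsto> Prod qs))"
  unfolding case_family_def
  using assms seq_ok_wf_right[OF assms(1)]
  by (intro tp.tuple) (auto simp: wf_fm_Prod_iff map_fst_case_family simp del: map_map)

lemma tp_Sel_Sum:
  assumes "wf_fm (Sum qs)" and "\<alpha> \<notin> dom \<Delta>" and "i < length qs"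
    and "tp src tgt f \<Gamma> (\<Delta>(\<alpha> \<mapsto> snd (qs ! i)))"
  shows "tp src tgt (Sel \<alpha> (fst (qs ! i)) f) \<Gamma> (\<Delta>(\<alpha> \<mapsto> Sum qs))"
  using assms seq_ok_update_right[OF tp_seq_ok[OF assms(4)] assms(1)]
  by (intro tp.inj[where X = "snd (qs ! i)"]) (auto simp: wf_fm_Sum_iff)

lemma tp_Sel_Prod:
  assumes "wf_fm (Prod qs)" and "\<alpha> \<notin> dom \<Gamma>" and "i < length qs"
    and "tp src tgt f (\<Gamma>(\<alpha> \<mapsto> snd (qs ! i))) \<Delta>"
  shows "tp src tgt (Sel \<alpha> (fst (qs ! i)) f) (\<Gamma>(\<alpha> \<mapsto> Prod qs)) \<Delta>"
  using assms seq_ok_update_left[OF tp_seq_ok[OF assms(4)] assms(1)]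
  by (intro tp.proj[where X = "snd (qs ! i)"]) (auto simp: wf_fm_Prod_iff)

lemma ex_fresh_list:
  assumes "infinite (UNIV :: 'c set)" and "finite (A :: 'c set)"
  obtains xs where "length xs = n" and "distinct xs" and "set xs \<inter> A = {}"
proof -
  obtain B where "finite B" "card B = n" "B \<subseteq> UNIV - A"
    using infinite_arbitrarily_large Diff_infinite_finite[OF assms(2,1)] by blast
  moreover obtain xs where "set xs = B" "distinct xs" using finite_distinct_list[OF \<open>finite B\<close>] by blast
  ultimately show thesis using that distinct_card by fastforce
qed

lemma joinall_singletons:
  "distinct cs \<Longrightarrow> length cs = length Xs \<Longrightarrow>
   joinall (map (\<lambda>(c, X). [c \<mapsto> X]) (zip cs Xs)) = map_of (zip cs Xs)"
proof (induction cs arbitrary: Xs)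
  case (Cons c cs)
  then obtain X Xs' where Xs: "Xs = X # Xs'" by (cases Xs) auto
  have "joinall (map (\<lambda>(c, X). [c \<mapsto> X]) (zip cs Xs')) = map_of (zip cs Xs')"
    using Cons.prems Xs by (intro Cons.IH) auto
  then have "joinall (map (\<lambda>(c, X). [c \<mapsto> X]) (zip (c # cs) Xs)) = [c \<mapsto> X] ++ map_of (zip cs Xs')"
    unfolding joinall_def Xs by simp
  also have "\<dots> = (map_of (zip cs Xs'))(c \<mapsto> X)"
    using Cons.prems Xs by (subst map_add_upd_left) auto
  finally show ?case using Xs by (simp del: fun_upd_apply)
qed (simp add: joinall_def)

lemma joinall_empties: "joinall (replicate n Map.empty) = Map.empty"
  by (induction n) (simp_all add: joinall_def)

lemma seq_ok_map_of_zip_singleton: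
  assumes "length cs = length Xs" and "\<forall>X\<in>set Xs. wf_fm X" and "\<beta> \<notin> set cs" and "wf_fm Y"
  shows "seq_ok (map_of (zip cs Xs)) [\<beta> \<mapsto> Y]" and "seq_ok [\<beta> \<mapsto> Y] (map_of (zip cs Xs))"
  using assms unfolding seq_ok_iff by (auto dest: map_of_zip_SomeD)

lemma ex_fresh_channel_pairs:
  assumes "infinite (UNIV :: 'c set)"
  obtains cs ds :: "'c list" where "length cs = n" and "length ds = n" and "distinct (cs @ ds)"
    and "\<alpha> \<notin> set (cs @ ds)" and "\<beta> \<notin> set (cs @ ds)"
proof -
  obtain xs :: "'c list" where "length xs = n + n" "distinct xs" "set xs \<inter> {\<alpha>, \<beta>} = {}"
    using ex_fresh_list[OF assms, of "{\<alpha>, \<beta>}"] by blast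
  then show thesis
    using that[of "take n xs" "drop n xs"] by simp
qed

lemma list_choice:
  assumes "\<And>k. k < n \<Longrightarrow> \<exists>x. P k x"
  obtains xs where "length xs = n" and "\<And>k. k < n \<Longrightarrow> P k (xs ! k)"
proof -
  have "\<forall>k\<in>{..<n}. \<exists>x. P k x" using assms by simp
  then obtain f where "\<forall>k\<in>{..<n}. P k (f k)" by (rule bchoice[THEN exE])
  then show thesis by (intro that[of "map f [0..<n]"]) auto
qed

lemma identity_Sum:
  assumes wf: "wf_fm (Sum qs)" and "\<alpha> \<noteq> \<beta>" and "length ts = length qs"
    and ts: "\<And>k. k < length qs \<Longrightarrow> is_id (snd (qs ! k)) \<alpha> \<beta> (ts ! k) \<and>
               tp src tgt (ts ! k) [\<alpha> \<mapsto> snd (qs ! k)] [\<beta> \<mapsto> snd (qs ! k)]"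
  shows "is_id (Sum qs) \<alpha> \<beta> (case_family \<alpha> qs (\<lambda>k. Sel \<beta> (fst (qs ! k)) (ts ! k)))"
    and "tp src tgt (case_family \<alpha> qs (\<lambda>k. Sel \<beta> (fst (qs ! k)) (ts ! k))) [\<alpha> \<mapsto> Sum qs] [\<beta> \<mapsto> Sum qs]"
proof -
  show "is_id (Sum qs) \<alpha> \<beta> (case_family \<alpha> qs (\<lambda>k. Sel \<beta> (fst (qs ! k)) (ts ! k)))"
    unfolding case_family_def using assms by (intro is_id.intros) auto
  show "tp src tgt (case_family \<alpha> qs (\<lambda>k. Sel \<beta> (fst (qs ! k)) (ts ! k))) [\<alpha> \<mapsto> Sum qs] [\<beta> \<mapsto> Sum qs]"
    using assms by (intro tp_case_family_Sum tp_Sel_Sum[OF wf]) (auto simp: seq_ok_singletons[OF _ wf wf])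
qed

lemma identity_Prod:
  assumes wf: "wf_fm (Prod qs)" and "\<alpha> \<noteq> \<beta>" and "length ts = length qs"
    and ts: "\<And>k. k < length qs \<Longrightarrow> is_id (snd (qs ! k)) \<alpha> \<beta> (ts ! k) \<and>
               tp src tgt (ts ! k) [\<alpha> \<mapsto> snd (qs ! k)] [\<beta> \<mapsto> snd (qs ! k)]"
  shows "is_id (Prod qs) \<alpha> \<beta> (case_family \<beta> qs (\<lambda>k. Sel \<alpha> (fst (qs ! k)) (ts ! k)))"
    and "tp src tgt (case_family \<beta> qs (\<lambda>k. Sel \<alpha> (fst (qs ! k)) (ts ! k))) [\<alpha> \<mapsto> Prod qs] [\<beta> \<mapsto> Prod qs]"
proof -
  show "is_id (Prod qs) \<alpha> \<beta> (case_family \<beta> qs (\<lambda>k. Sel \<alpha> (fst (qs ! k)) (ts ! k)))"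
    unfolding case_family_def using assms by (intro is_id.intros) auto
  show "tp src tgt (case_family \<beta> qs (\<lambda>k. Sel \<alpha> (fst (qs ! k)) (ts ! k))) [\<alpha> \<mapsto> Prod qs] [\<beta> \<mapsto> Prod qs]"
    using assms by (intro tp_case_family_Prod tp_Sel_Prod[OF wf]) (auto simp: seq_ok_singletons[OF _ wf wf])
qed

lemma identity_Tens:
  assumes "length cs = length Xs" and "length ds = length Xs" and "length ts = length Xs"
    and "distinct (cs @ ds)" and "\<alpha> \<notin> set (cs @ ds)" and "\<beta> \<notin> set (cs @ ds)" and "\<alpha> \<noteq> \<beta>"
    and wf: "\<forall>X\<in>set Xs. wf_fm X"
    and ts: "\<And>k. k < length Xs \<Longrightarrow> is_id (Xs ! k) (cs ! k) (ds ! k) (ts ! k) \<and>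
               tp src tgt (ts ! k) [cs ! k \<mapsto> Xs ! k] [ds ! k \<mapsto> Xs ! k]"
  shows "is_id (Tens Xs) \<alpha> \<beta> (Split \<alpha> cs (Fork \<beta> (map (\<lambda>k. (ds ! k, {cs ! k}, ts ! k)) [0..<length Xs])))"
    and "tp src tgt (Split \<alpha> cs (Fork \<beta> (map (\<lambda>k. (ds ! k, {cs ! k}, ts ! k)) [0..<length Xs])))
           [\<alpha> \<mapsto> Tens Xs] [\<beta> \<mapsto> Tens Xs]"
proof -
  show "is_id (Tens Xs) \<alpha> \<beta> (Split \<alpha> cs (Fork \<beta> (map (\<lambda>k. (ds ! k, {cs ! k}, ts ! k)) [0..<length Xs])))"
    using assms by (intro is_id.intros) auto
  let ?Gs = "map (\<lambda>(c, X). [c \<mapsto> X]) (zip cs Xs)" and ?Ds = "replicate (length Xs) Map.empty"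
  have wf_Tens: "wf_fm (Tens Xs)" using wf by (rule wf_fm.intros)
  have "ds ! k \<noteq> cs ! k" if "k < length Xs" for k
    using assms(1,2,4) that by (metis disjoint_iff distinct_append nth_mem)
  then have "tp src tgt (Fork \<beta> (map (\<lambda>k. (ds ! k, {cs ! k}, ts ! k)) [0..<length Xs]))
      (joinall ?Gs) ((joinall ?Ds)(\<beta> \<mapsto> Tens Xs))"
    using assms seq_ok_map_of_zip_singleton(1)[OF assms(1) wf _ wf_Tens]
    by (intro tp.rtensor) (auto simp: joinall_singletons joinall_empties nth_eq_iff_index_eq)
  then show "tp src tgt (Split \<alpha> cs (Fork \<beta> (map (\<lambda>k. (ds ! k, {cs ! k}, ts ! k)) [0..<length Xs])))
      [\<alpha> \<mapsto> Tens Xs] [\<beta> \<mapsto> Tens Xs]"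
    using assms seq_ok_map_of_zip_singleton(1)[OF assms(1) wf _ wf_Tens]
    by (intro tp.ltensor[where \<Gamma> = Map.empty, simplified])
       (auto simp: joinall_singletons joinall_empties seq_ok_singletons[OF _ wf_Tens wf_Tens])
qed

lemma identity_Par:
  assumes "length cs = length Xs" and "length ds = length Xs" and "length ts = length Xs"
    and "distinct (cs @ ds)" and "\<alpha> \<notin> set (cs @ ds)" and "\<beta> \<notin> set (cs @ ds)" and "\<alpha> \<noteq> \<beta>"
    and wf: "\<forall>X\<in>set Xs. wf_fm X"
    and ts: "\<And>k. k < length Xs \<Longrightarrow> is_id (Xs ! k) (cs ! k) (ds ! k) (ts ! k) \<and>
               tp src tgt (ts ! k) [cs ! k \<mapsto> Xs ! k] [ds ! k \<mapsto> Xs ! k]"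
  shows "is_id (Par Xs) \<alpha> \<beta> (Split \<beta> ds (Fork \<alpha> (map (\<lambda>k. (cs ! k, {ds ! k}, ts ! k)) [0..<length Xs])))"
    and "tp src tgt (Split \<beta> ds (Fork \<alpha> (map (\<lambda>k. (cs ! k, {ds ! k}, ts ! k)) [0..<length Xs])))
           [\<alpha> \<mapsto> Par Xs] [\<beta> \<mapsto> Par Xs]"
proof -
  show "is_id (Par Xs) \<alpha> \<beta> (Split \<beta> ds (Fork \<alpha> (map (\<lambda>k. (cs ! k, {ds ! k}, ts ! k)) [0..<length Xs])))"
    using assms by (intro is_id.intros) auto
  let ?Gs = "replicate (length Xs) Map.empty" and ?Ds = "map (\<lambda>(c, X). [c \<mapsto> X]) (zip ds Xs)"
  have wf_Par: "wf_fm (Par Xs)" using wf by (rule wf_fm.intros)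
  have "cs ! k \<noteq> ds ! k" if "k < length Xs" for k
    using assms(1,2,4) that by (metis disjoint_iff distinct_append nth_mem)
  then have "tp src tgt (Fork \<alpha> (map (\<lambda>k. (cs ! k, {ds ! k}, ts ! k)) [0..<length Xs]))
      ((joinall ?Gs)(\<alpha> \<mapsto> Par Xs)) (joinall ?Ds)"
    using assms seq_ok_map_of_zip_singleton(2)[OF assms(2) wf _ wf_Par]
    by (intro tp.lpar) (auto simp: joinall_singletons joinall_empties nth_eq_iff_index_eq)
  then show "tp src tgt (Split \<beta> ds (Fork \<alpha> (map (\<lambda>k. (cs ! k, {ds ! k}, ts ! k)) [0..<length Xs])))
      [\<alpha> \<mapsto> Par Xs] [\<beta> \<mapsto> Par Xs]"
    using assms seq_ok_map_of_zip_singleton(2)[OF assms(2) wf _ wf_Par]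
    by (intro tp.rpar[where \<Delta> = Map.empty, simplified])
       (auto simp: joinall_singletons joinall_empties seq_ok_singletons[OF _ wf_Par wf_Par])
qed

lemma ex_identity:
  fixes \<alpha> \<beta> :: 'c
  assumes "infinite (UNIV :: 'c set)" and "wf_fm X" and "\<alpha> \<noteq> \<beta>"
  obtains i :: "('a, 'm, 'e, 'c) tm" where "is_id X \<alpha> \<beta> i" and "tp src tgt i [\<alpha> \<mapsto> X] [\<beta> \<mapsto> X]"
proof -
  from assms(2,3) have "\<exists>i :: ('a, 'm, 'e, 'c) tm. is_id X \<alpha> \<beta> i \<and> tp src tgt i [\<alpha> \<mapsto> X] [\<beta> \<mapsto> X]"
  proof (induction X arbitrary: \<alpha> \<beta> rule: wf_fm.induct)
    case (1 A)
    then show ?case by (blast intro: is_id.intros tp.eq)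
  next
    case (2 qs)
    then have "\<exists>t. is_id (snd (qs ! k)) \<alpha> \<beta> t \<and> tp src tgt t [\<alpha> \<mapsto> snd (qs ! k)] [\<beta> \<mapsto> snd (qs ! k)]"
      if "k < length qs" for k
      using that by (metis nth_mem)
    then obtain ts where ts: "length ts = length qs" "\<And>k. k < length qs \<Longrightarrow>
        is_id (snd (qs ! k)) \<alpha> \<beta> (ts ! k) \<and> tp src tgt (ts ! k) [\<alpha> \<mapsto> snd (qs ! k)] [\<beta> \<mapsto> snd (qs ! k)]"
      by (rule list_choice) auto
    have "wf_fm (Sum qs)" using 2 by (auto intro: wf_fm.intros)
    from identity_Sum[OF this \<open>\<alpha> \<noteq> \<beta>\<close> ts] show ?case by blast
  next
    case (3 qs)
    then have "\<exists>t. is_id (snd (qs ! k)) \<alpha> \<beta> t \<and> tp src tgt t [\<alpha> \<mapsto> snd (qs ! k)] [\<beta> \<mapsto> snd (qs ! k)]"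
      if "k < length qs" for k
      using that by (metis nth_mem)
    then obtain ts where ts: "length ts = length qs" "\<And>k. k < length qs \<Longrightarrow>
        is_id (snd (qs ! k)) \<alpha> \<beta> (ts ! k) \<and> tp src tgt (ts ! k) [\<alpha> \<mapsto> snd (qs ! k)] [\<beta> \<mapsto> snd (qs ! k)]"
      by (rule list_choice) auto
    have "wf_fm (Prod qs)" using 3 by (auto intro: wf_fm.intros)
    from identity_Prod[OF this \<open>\<alpha> \<noteq> \<beta>\<close> ts] show ?case by blast
  next
    case (4 Xs)
    obtain cs ds :: "'c list" where cd: "length cs = length Xs" "length ds = length Xs"
      "distinct (cs @ ds)" "\<alpha> \<notin> set (cs @ ds)" "\<beta> \<notin> set (cs @ ds)"
      using ex_fresh_channel_pairs[OF assms(1)] by metis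
    then have "cs ! k \<noteq> ds ! k" if "k < length Xs" for k
      using that by (metis disjoint_iff distinct_append nth_mem)
    then have "\<exists>t. is_id (Xs ! k) (cs ! k) (ds ! k) t \<and> tp src tgt t [cs ! k \<mapsto> Xs ! k] [ds ! k \<mapsto> Xs ! k]"
      if "k < length Xs" for k
      using 4 that by (metis nth_mem)
    then obtain ts where ts: "length ts = length Xs" "\<And>k. k < length Xs \<Longrightarrow>
        is_id (Xs ! k) (cs ! k) (ds ! k) (ts ! k) \<and> tp src tgt (ts ! k) [cs ! k \<mapsto> Xs ! k] [ds ! k \<mapsto> Xs ! k]"
      by (rule list_choice) auto
    have "\<forall>X\<in>set Xs. wf_fm X" using 4 by blast
    from identity_Tens[OF cd(1,2) ts(1) cd(3-5) \<open>\<alpha> \<noteq> \<beta>\<close> this ts(2)] show ?case by blast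
  next
    case (5 Xs)
    obtain cs ds :: "'c list" where cd: "length cs = length Xs" "length ds = length Xs"
      "distinct (cs @ ds)" "\<alpha> \<notin> set (cs @ ds)" "\<beta> \<notin> set (cs @ ds)"
      using ex_fresh_channel_pairs[OF assms(1)] by metis
    then have "cs ! k \<noteq> ds ! k" if "k < length Xs" for k
      using that by (metis disjoint_iff distinct_append nth_mem)
    then have "\<exists>t. is_id (Xs ! k) (cs ! k) (ds ! k) t \<and> tp src tgt t [cs ! k \<mapsto> Xs ! k] [ds ! k \<mapsto> Xs ! k]"
      if "k < length Xs" for k
      using 5 that by (metis nth_mem)
    then obtain ts where ts: "length ts = length Xs" "\<And>k. k < length Xs \<Longrightarrow>
        is_id (Xs ! k) (cs ! k) (ds ! k) (ts ! k) \<and> tp src tgt (ts ! k) [cs ! k \<mapsto> Xs ! k] [ds ! k \<mapsto> Xs ! k]"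
      by (rule list_choice) auto
    have "\<forall>X\<in>set Xs. wf_fm X" using 5 by blast
    from identity_Par[OF cd(1,2) ts(1) cd(3-5) \<open>\<alpha> \<noteq> \<beta>\<close> this ts(2)] show ?case by blast
  qed
  then show thesis using that by blast
qed

section \<open>The congruence \<open>\<sim>\<close> and the hom-sets of CProc(A)\<close>

lemma sim_tp: "sim src tgt \<Gamma> \<Delta> t u \<Longrightarrow> tp src tgt t \<Gamma> \<Delta> \<and> tp src tgt u \<Gamma> \<Delta>"
proof -
  have "(conv1 src tgt \<Gamma> \<Delta>)\<^sup>*\<^sup>* t u \<Longrightarrow> tp src tgt t \<Gamma> \<Delta> \<Longrightarrow> tp src tgt u \<Gamma> \<Delta>"
    by (induction rule: rtranclp_induct) (auto simp: conv1_def)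
  then show "sim src tgt \<Gamma> \<Delta> t u \<Longrightarrow> ?thesis" unfolding sim_def by blast
qed

lemma sim_refl: "tp src tgt t \<Gamma> \<Delta> \<Longrightarrow> sim src tgt \<Gamma> \<Delta> t t"
  unfolding sim_def by simp

lemma sim_sym: "sim src tgt \<Gamma> \<Delta> t u \<Longrightarrow> sim src tgt \<Gamma> \<Delta> u t"
proof -
  have "symp (conv1 src tgt \<Gamma> \<Delta>)" unfolding symp_def conv1_def by blast
  then show "sim src tgt \<Gamma> \<Delta> t u \<Longrightarrow> ?thesis"
    using sim_tp symp_rtranclp unfolding sim_def by (blast dest: sympD)
qed

lemma sim_trans [trans]: "sim src tgt \<Gamma> \<Delta> t u \<Longrightarrow> sim src tgt \<Gamma> \<Delta> u v \<Longrightarrow> sim src tgt \<Gamma> \<Delta> t v"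
  unfolding sim_def by auto

lemma step_sim: "tp src tgt t \<Gamma> \<Delta> \<Longrightarrow> tp src tgt u \<Gamma> \<Delta> \<Longrightarrow> step t u \<Longrightarrow> sim src tgt \<Gamma> \<Delta> t u"
  unfolding sim_def conv1_def by (blast intro: cstep.intros)

lemma cls_eq: "sim src tgt \<Gamma> \<Delta> t u \<Longrightarrow> cls src tgt \<Gamma> \<Delta> t = cls src tgt \<Gamma> \<Delta> u"
  unfolding cls_def by (blast intro: sim_trans sim_sym)

lemma cls_eqD: "tp src tgt u \<Gamma> \<Delta> \<Longrightarrow> cls src tgt \<Gamma> \<Delta> t = cls src tgt \<Gamma> \<Delta> u \<Longrightarrow> sim src tgt \<Gamma> \<Delta> t u"
  unfolding cls_def using sim_refl by blast

lemma mem_cls_iff: "u \<in> cls src tgt \<Gamma> \<Delta> t \<longleftrightarrow> sim src tgt \<Gamma> \<Delta> t u"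
  unfolding cls_def by simp

lemma sim_context:
  assumes "sim src tgt \<Gamma> \<Delta> t u"
    and "\<And>v. tp src tgt v \<Gamma> \<Delta> \<Longrightarrow> tp src tgt (C v) \<Gamma>' \<Delta>'"
    and "\<And>v w. cstep v w \<Longrightarrow> cstep (C v) (C w)"
  shows "sim src tgt \<Gamma>' \<Delta>' (C t) (C u)"
proof -
  have "(conv1 src tgt \<Gamma> \<Delta>)\<^sup>*\<^sup>* t u" and "tp src tgt t \<Gamma> \<Delta>"
    using assms(1) unfolding sim_def by auto
  then have "(conv1 src tgt \<Gamma>' \<Delta>')\<^sup>*\<^sup>* (C t) (C u)"
  proof (induction rule: rtranclp_induct)
    case (step v w)
    then have "conv1 src tgt \<Gamma>' \<Delta>' (C v) (C w)"
      using assms(2,3) unfolding conv1_def by blast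
    then show ?case using step by simp
  qed simp
  then show ?thesis using assms(1,2) sim_tp unfolding sim_def by blast
qed

lemma sim_Cut_left:
  "sim src tgt \<Gamma> \<Delta> t u \<Longrightarrow> (\<And>v. tp src tgt v \<Gamma> \<Delta> \<Longrightarrow> tp src tgt (Cut \<gamma> v h) \<Gamma>' \<Delta>') \<Longrightarrow>
   sim src tgt \<Gamma>' \<Delta>' (Cut \<gamma> t h) (Cut \<gamma> u h)"
  by (erule sim_context) (auto intro: cstep.intros)

lemma sim_Cut_right:
  "sim src tgt \<Gamma> \<Delta> t u \<Longrightarrow> (\<And>v. tp src tgt v \<Gamma> \<Delta> \<Longrightarrow> tp src tgt (Cut \<gamma> h v) \<Gamma>' \<Delta>') \<Longrightarrow>
   sim src tgt \<Gamma>' \<Delta>' (Cut \<gamma> h t) (Cut \<gamma> h u)"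
  by (erule sim_context) (auto intro: cstep.intros)

lemma cstep_case_family:
  assumes "cstep v w" and "k < length qs"
  shows "cstep (case_family \<alpha> qs (h(k := v))) (case_family \<alpha> qs (h(k := w)))"
proof -
  let ?ps = "map (\<lambda>i. (fst (qs ! i), (h(k := v)) i)) [0..<length qs]"
  have "?ps[k := (fst (qs ! k), w)] = map (\<lambda>i. (fst (qs ! i), (h(k := w)) i)) [0..<length qs]"
    by (rule nth_equalityI) (auto simp: nth_list_update)
  moreover have "cstep (Case \<alpha> ?ps) (Case \<alpha> (?ps[k := (fst (qs ! k), w)]))"
    using assms by (intro cstep.intros(2)) auto
  ultimately show ?thesis unfolding case_family_def by simp
qed

lemma sim_case_family:
  assumes sim: "\<And>i. i < length qs \<Longrightarrow> sim src tgt (G i) (D i) (fs i) (gs i)"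
    and tp: "\<And>hs. (\<And>i. i < length qs \<Longrightarrow> tp src tgt (hs i) (G i) (D i)) \<Longrightarrow>
                tp src tgt (case_family \<alpha> qs hs) \<Gamma> \<Delta>"
  shows "sim src tgt \<Gamma> \<Delta> (case_family \<alpha> qs fs) (case_family \<alpha> qs gs)"
proof -
  define H where "H k i = (if i < k then gs i else fs i)" for k i
  have typed: "tp src tgt (fs i) (G i) (D i)" "tp src tgt (gs i) (G i) (D i)" if "i < length qs" for i
    using sim[OF that] sim_tp by blast+
  have "sim src tgt \<Gamma> \<Delta> (case_family \<alpha> qs fs) (case_family \<alpha> qs (H k))" if "k \<le> length qs" for k
    using that
  proof (induction k)
    case 0
    show ?case unfolding H_def using typed by (auto intro: sim_refl tp)
  next
    case (Suc k)
    then have k: "k < length qs" by simp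
    have "sim src tgt \<Gamma> \<Delta> (case_family \<alpha> qs ((H k)(k := fs k))) (case_family \<alpha> qs ((H k)(k := gs k)))"
    proof (rule sim_context[OF sim[OF k]])
      show "tp src tgt (case_family \<alpha> qs ((H k)(k := v))) \<Gamma> \<Delta>" if "tp src tgt v (G k) (D k)" for v
        using that typed by (intro tp) (auto simp: H_def)
      show "cstep (case_family \<alpha> qs ((H k)(k := v))) (case_family \<alpha> qs ((H k)(k := w)))"
        if "cstep v w" for v w
        using that k by (rule cstep_case_family)
    qed
    moreover have "(H k)(k := fs k) = H k" and "(H k)(k := gs k) = H (Suc k)"
      by (auto simp: H_def)
    ultimately show ?case using Suc by (auto intro: sim_trans)
  qed
  moreover have "case_family \<alpha> qs (H (length qs)) = case_family \<alpha> qs gs"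
    by (simp add: case_family_def H_def)
  ultimately show ?thesis by (metis order.refl)
qed

definition repr :: "'t set \<Rightarrow> 't" where
  "repr C = (SOME t. t \<in> C)"

lemma cls_in_hom: "tp src tgt t \<Gamma> \<Delta> \<Longrightarrow> cls src tgt \<Gamma> \<Delta> t \<in> hom src tgt \<Gamma> \<Delta>"
  unfolding hom_def by blast

lemma sim_repr_cls: "tp src tgt t \<Gamma> \<Delta> \<Longrightarrow> sim src tgt \<Gamma> \<Delta> t (repr (cls src tgt \<Gamma> \<Delta> t))"
  using someI[of "\<lambda>u. u \<in> cls src tgt \<Gamma> \<Delta> t" t] unfolding repr_def mem_cls_iff by (blast intro: sim_refl)

lemma repr_in_hom:
  assumes "C \<in> hom src tgt \<Gamma> \<Delta>"
  shows "tp src tgt (repr C) \<Gamma> \<Delta>" and "cls src tgt \<Gamma> \<Delta> (repr C) = C"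
proof -
  obtain t where "tp src tgt t \<Gamma> \<Delta>" and C: "C = cls src tgt \<Gamma> \<Delta> t"
    using assms unfolding hom_def by blast
  then have "sim src tgt \<Gamma> \<Delta> t (repr C)" using sim_repr_cls by blast
  then show "tp src tgt (repr C) \<Gamma> \<Delta>" and "cls src tgt \<Gamma> \<Delta> (repr C) = C"
    using C sim_tp cls_eq by metis+
qed

lemma bij_betw_hom_family:
  assumes K_tp: "\<And>fs. (\<And>i. i < n \<Longrightarrow> tp src tgt (fs i) (G i) (D i)) \<Longrightarrow> tp src tgt (K fs) \<Gamma> \<Delta>"
    and K_cong: "\<And>fs gs. (\<And>i. i < n \<Longrightarrow> sim src tgt (G i) (D i) (fs i) (gs i)) \<Longrightarrow>
        sim src tgt \<Gamma> \<Delta> (K fs) (K gs)"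
    and K_inj: "\<And>fs gs i. (\<And>i. i < n \<Longrightarrow> tp src tgt (fs i) (G i) (D i)) \<Longrightarrow>
        (\<And>i. i < n \<Longrightarrow> tp src tgt (gs i) (G i) (D i)) \<Longrightarrow> sim src tgt \<Gamma> \<Delta> (K fs) (K gs) \<Longrightarrow>
        i < n \<Longrightarrow> sim src tgt (G i) (D i) (fs i) (gs i)"
    and K_surj: "\<And>t. tp src tgt t \<Gamma> \<Delta> \<Longrightarrow>
        \<exists>fs. (\<forall>i<n. tp src tgt (fs i) (G i) (D i)) \<and> sim src tgt \<Gamma> \<Delta> t (K fs)"
  shows "bij_betw (\<lambda>F. cls src tgt \<Gamma> \<Delta> (K (\<lambda>i. repr (F i))))
           (Pi\<^sub>E {..<n} (\<lambda>i. hom src tgt (G i) (D i))) (hom src tgt \<Gamma> \<Delta>)"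
proof -
  let ?A = "Pi\<^sub>E {..<n} (\<lambda>i. hom src tgt (G i) (D i))"
  have repr_F: "tp src tgt (repr (F i)) (G i) (D i)" "cls src tgt (G i) (D i) (repr (F i)) = F i"
    if "F \<in> ?A" and "i < n" for F i
  proof -
    have "F i \<in> hom src tgt (G i) (D i)" using PiE_mem[OF that(1), of i] that(2) by simp
    then show "tp src tgt (repr (F i)) (G i) (D i)" "cls src tgt (G i) (D i) (repr (F i)) = F i"
      by (rule repr_in_hom)+
  qed
  have "inj_on (\<lambda>F. cls src tgt \<Gamma> \<Delta> (K (\<lambda>i. repr (F i)))) ?A"
  proof (rule inj_onI, rule ext)
    fix F F' i
    assume F: "F \<in> ?A" and F': "F' \<in> ?A"
      and eq: "cls src tgt \<Gamma> \<Delta> (K (\<lambda>i. repr (F i))) = cls src tgt \<Gamma> \<Delta> (K (\<lambda>i. repr (F' i)))"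
    show "F i = F' i"
    proof (cases "i < n")
      case True
      have "sim src tgt \<Gamma> \<Delta> (K (\<lambda>i. repr (F i))) (K (\<lambda>i. repr (F' i)))"
        using eq K_tp[of "\<lambda>i. repr (F' i)"] repr_F(1)[OF F'] by (simp add: cls_eqD)
      then have "sim src tgt (G i) (D i) (repr (F i)) (repr (F' i))"
        using K_inj[of "\<lambda>i. repr (F i)" "\<lambda>i. repr (F' i)" i] True repr_F(1)[OF F] repr_F(1)[OF F']
        by simp
      then have "cls src tgt (G i) (D i) (repr (F i)) = cls src tgt (G i) (D i) (repr (F' i))"
        by (rule cls_eq)
      then show ?thesis using repr_F(2)[OF F True] repr_F(2)[OF F' True] by simp
    next
      case False
      then show ?thesis using PiE_arb[OF F] PiE_arb[OF F'] by simp
    qed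
  qed
  moreover have "(\<lambda>F. cls src tgt \<Gamma> \<Delta> (K (\<lambda>i. repr (F i)))) ` ?A \<subseteq> hom src tgt \<Gamma> \<Delta>"
  proof (rule image_subsetI)
    show "cls src tgt \<Gamma> \<Delta> (K (\<lambda>i. repr (F i))) \<in> hom src tgt \<Gamma> \<Delta>" if "F \<in> ?A" for F
      using K_tp[of "\<lambda>i. repr (F i)"] repr_F(1)[OF that] by (simp add: cls_in_hom)
  qed
  moreover have "hom src tgt \<Gamma> \<Delta> \<subseteq> (\<lambda>F. cls src tgt \<Gamma> \<Delta> (K (\<lambda>i. repr (F i)))) ` ?A"
  proof
    fix C assume "C \<in> hom src tgt \<Gamma> \<Delta>"
    then obtain t where t: "tp src tgt t \<Gamma> \<Delta>" "C = cls src tgt \<Gamma> \<Delta> t"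
      unfolding hom_def by blast
    then obtain fs where fs: "\<forall>i<n. tp src tgt (fs i) (G i) (D i)" "sim src tgt \<Gamma> \<Delta> t (K fs)"
      using K_surj by blast
    define F where "F = (\<lambda>i\<in>{..<n}. cls src tgt (G i) (D i) (fs i))"
    have "sim src tgt \<Gamma> \<Delta> (K (\<lambda>i. repr (F i))) (K fs)"
    proof (rule K_cong)
      show "sim src tgt (G i) (D i) (repr (F i)) (fs i)" if "i < n" for i
        using sim_sym[OF sim_repr_cls[OF fs(1)[rule_format, OF that]]] that by (simp add: F_def)
    qed
    then have "cls src tgt \<Gamma> \<Delta> (K (\<lambda>i. repr (F i))) = C"
      using cls_eq cls_eq[OF fs(2)] t(2) by simp
    moreover have "F \<in> ?A" using fs(1) by (simp add: F_def cls_in_hom)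
    ultimately show "C \<in> (\<lambda>F. cls src tgt \<Gamma> \<Delta> (K (\<lambda>i. repr (F i)))) ` ?A" by (rule image_eqI[OF sym])
  qed
  ultimately show ?thesis unfolding bij_betw_def by (blast intro: subset_antisym)
qed

lemma cls_family_natural:
  assumes C_tp: "\<And>v. tp src tgt v \<Gamma> \<Delta> \<Longrightarrow> tp src tgt (C v) \<Gamma>' \<Delta>'"
    and C_tp_family: "\<And>i v. i < n \<Longrightarrow> tp src tgt v (G i) (D i) \<Longrightarrow> tp src tgt (C v) (G' i) (D' i)"
    and C_cstep: "\<And>v w. cstep v w \<Longrightarrow> cstep (C v) (C w)"
    and K_tp: "\<And>fs. (\<And>i. i < n \<Longrightarrow> tp src tgt (fs i) (G i) (D i)) \<Longrightarrow> tp src tgt (K fs) \<Gamma> \<Delta>"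
    and K'_tp: "\<And>fs. (\<And>i. i < n \<Longrightarrow> tp src tgt (fs i) (G' i) (D' i)) \<Longrightarrow> tp src tgt (K' fs) \<Gamma>' \<Delta>'"
    and K'_cong: "\<And>fs gs. (\<And>i. i < n \<Longrightarrow> sim src tgt (G' i) (D' i) (fs i) (gs i)) \<Longrightarrow>
        sim src tgt \<Gamma>' \<Delta>' (K' fs) (K' gs)"
    and commute: "\<And>fs. step (C (K fs)) (K' (\<lambda>i. C (fs i)))"
    and fs: "\<And>i. i < n \<Longrightarrow> tp src tgt (fs i) (G i) (D i)"
    and t: "t \<in> cls src tgt \<Gamma> \<Delta> (K (\<lambda>i. repr ((\<lambda>i\<in>{..<n}. cls src tgt (G i) (D i) (fs i)) i)))"
  shows "cls src tgt \<Gamma>' \<Delta>' (C t) =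
    cls src tgt \<Gamma>' \<Delta>' (K' (\<lambda>i. repr ((\<lambda>i\<in>{..<n}. cls src tgt (G' i) (D' i) (C (fs i))) i)))"
proof -
  let ?r = "\<lambda>i. repr ((\<lambda>i\<in>{..<n}. cls src tgt (G i) (D i) (fs i)) i)"
  have r: "sim src tgt (G i) (D i) (fs i) (?r i)" if "i < n" for i
    using sim_repr_cls[OF fs[OF that]] that by (simp only: restrict_apply' lessThan_iff)
  then have r_tp: "tp src tgt (?r i) (G i) (D i)" if "i < n" for i
    using that sim_tp by blast
  have "sim src tgt \<Gamma> \<Delta> (K ?r) t" using t unfolding mem_cls_iff .
  then have "sim src tgt \<Gamma>' \<Delta>' (C t) (C (K ?r))"
    by (rule sim_context[OF sim_sym C_tp C_cstep])
  also have "sim src tgt \<Gamma>' \<Delta>' (C (K ?r)) (K' (\<lambda>i. C (?r i)))"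
  proof (rule step_sim[OF _ _ commute])
    show "tp src tgt (C (K ?r)) \<Gamma>' \<Delta>'"
      using r_tp by (rule C_tp[OF K_tp])
    show "tp src tgt (K' (\<lambda>i. C (?r i))) \<Gamma>' \<Delta>'"
      using C_tp_family[OF _ r_tp] by (rule K'_tp)
  qed
  also have "sim src tgt \<Gamma>' \<Delta>' (K' (\<lambda>i. C (?r i)))
      (K' (\<lambda>i. repr ((\<lambda>i\<in>{..<n}. cls src tgt (G' i) (D' i) (C (fs i))) i)))"
  proof (rule K'_cong)
    fix i assume i: "i < n"
    have "sim src tgt (G' i) (D' i) (C (?r i)) (C (fs i))"
      using r[OF i] by (rule sim_context[OF sim_sym C_tp_family[OF i] C_cstep])
    also have "sim src tgt (G' i) (D' i) (C (fs i)) (repr (cls src tgt (G' i) (D' i) (C (fs i))))"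
      by (rule sim_repr_cls[OF C_tp_family[OF i fs[OF i]]])
    finally show "sim src tgt (G' i) (D' i) (C (?r i))
        (repr ((\<lambda>i\<in>{..<n}. cls src tgt (G' i) (D' i) (C (fs i))) i))"
      using i by (simp only: restrict_apply' lessThan_iff)
  qed
  finally show ?thesis by (rule cls_eq)
qed

section \<open>Sums and products\<close>

lemma tp_Cut_unary_left:
  assumes "tp src tgt f [x \<mapsto> X] [\<gamma> \<mapsto> Z]" and "tp src tgt g (\<Gamma>(\<gamma> \<mapsto> Z)) \<Delta>" and "x \<noteq> \<gamma>"
    and "\<gamma> \<notin> dom \<Gamma> \<union> dom \<Delta>" and "x \<notin> dom \<Gamma> \<union> dom \<Delta>"
  shows "tp src tgt (Cut \<gamma> f g) (\<Gamma>(x \<mapsto> X)) \<Delta>"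
proof -
  have "tp src tgt (Cut \<gamma> f g) ([x \<mapsto> X] ++ \<Gamma>) (Map.empty ++ \<Delta>)"
    by (rule tp.cut[where \<Delta> = Map.empty]) (use assms in auto)
  moreover have "[x \<mapsto> X] ++ \<Gamma> = \<Gamma>(x \<mapsto> X)"
    using map_add_upd_left[of x \<Gamma> Map.empty X] assms(5) by simp
  ultimately show ?thesis by simp
qed

lemma tp_Cut_unary_right:
  assumes "tp src tgt f \<Gamma> (\<Delta>(\<gamma> \<mapsto> Z))" and "tp src tgt g [\<gamma> \<mapsto> Z] [x \<mapsto> X]" and "x \<noteq> \<gamma>"
    and "\<gamma> \<notin> dom \<Gamma> \<union> dom \<Delta>" and "x \<notin> dom \<Gamma> \<union> dom \<Delta>"
  shows "tp src tgt (Cut \<gamma> f g) \<Gamma> (\<Delta>(x \<mapsto> X))"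
proof -
  have "tp src tgt (Cut \<gamma> f g) (\<Gamma> ++ Map.empty) (\<Delta> ++ [x \<mapsto> X])"
    by (rule tp.cut[where \<Gamma>' = Map.empty]) (use assms in auto)
  then show ?thesis by simp
qed

lemma tp_Cut_into_left:
  assumes "tp src tgt h \<Gamma>0 (\<Delta>0(\<gamma> \<mapsto> Z))" and "tp src tgt v \<Gamma> \<Delta>" and "\<Gamma> \<gamma> = Some Z"
    and "\<gamma> \<notin> dom \<Gamma>0 \<union> dom \<Delta>0 \<union> dom \<Delta>" and "(dom \<Gamma>0 \<union> dom \<Delta>0) \<inter> (dom \<Gamma> \<union> dom \<Delta>) = {}"
  shows "tp src tgt (Cut \<gamma> h v) (\<Gamma>0 ++ \<Gamma>(\<gamma> := None)) (\<Delta>0 ++ \<Delta>)"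
proof -
  have "\<Gamma> = (\<Gamma>(\<gamma> := None))(\<gamma> \<mapsto> Z)" using assms(3) by auto
  then show ?thesis using assms by (intro tp.cut) auto
qed

lemma tp_Cut_into_right:
  assumes "tp src tgt v \<Gamma> \<Delta>" and "tp src tgt h (\<Gamma>0(\<gamma> \<mapsto> Z)) \<Delta>0" and "\<Delta> \<gamma> = Some Z"
    and "\<gamma> \<notin> dom \<Gamma>0 \<union> dom \<Delta>0 \<union> dom \<Gamma>" and "(dom \<Gamma>0 \<union> dom \<Delta>0) \<inter> (dom \<Gamma> \<union> dom \<Delta>) = {}"
  shows "tp src tgt (Cut \<gamma> v h) (\<Gamma> ++ \<Gamma>0) (\<Delta>(\<gamma> := None) ++ \<Delta>0)"
proof -
  have "\<Delta> = (\<Delta>(\<gamma> := None))(\<gamma> \<mapsto> Z)" using assms(3) by auto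
  then show ?thesis using assms by (intro tp.cut) auto
qed

lemma sim_Cut_identity_left:
  assumes "is_id X \<delta> \<gamma> i" and "tp src tgt i [\<delta> \<mapsto> X] [\<gamma> \<mapsto> X]" and "tp src tgt f (\<Gamma>(\<gamma> \<mapsto> X)) \<Delta>"
    and "\<delta> \<notin> chans f" and "\<gamma> \<notin> dom \<Gamma> \<union> dom \<Delta>" and "\<delta> \<notin> dom \<Gamma> \<union> dom \<Delta>" and "\<delta> \<noteq> \<gamma>"
  shows "sim src tgt (\<Gamma>(\<delta> \<mapsto> X)) \<Delta> (Cut \<gamma> i f) (ren \<gamma> \<delta> f)"
  using assms by (intro step_sim tp_Cut_unary_left tp_ren_left step.r2) auto

lemma sim_Cut_identity_right:
  assumes "is_id X \<gamma> \<delta> i" and "tp src tgt i [\<gamma> \<mapsto> X] [\<delta> \<mapsto> X]" and "tp src tgt f \<Gamma> (\<Delta>(\<gamma> \<mapsto> X))"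
    and "\<delta> \<notin> chans f" and "\<gamma> \<notin> dom \<Gamma> \<union> dom \<Delta>" and "\<delta> \<notin> dom \<Gamma> \<union> dom \<Delta>" and "\<delta> \<noteq> \<gamma>"
  shows "sim src tgt \<Gamma> (\<Delta>(\<delta> \<mapsto> X)) (Cut \<gamma> f i) (ren \<gamma> \<delta> f)"
  using assms by (intro step_sim tp_Cut_unary_right tp_ren_right step.r1) auto

lemma step_Cut_case_family_left:
  "\<alpha> \<noteq> \<gamma> \<Longrightarrow> step (Cut \<gamma> (case_family \<alpha> qs fs) g) (case_family \<alpha> qs (\<lambda>i. Cut \<gamma> (fs i) g))"
  using step.r3[of \<alpha> \<gamma> "map (\<lambda>i. (fst (qs ! i), fs i)) [0..<length qs]" g]
  by (simp add: case_family_def comp_def)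

lemma step_Cut_case_family_right:
  "\<alpha> \<noteq> \<gamma> \<Longrightarrow> step (Cut \<gamma> g (case_family \<alpha> qs fs)) (case_family \<alpha> qs (\<lambda>i. Cut \<gamma> g (fs i)))"
  using step.r4[of \<alpha> \<gamma> g "map (\<lambda>i. (fst (qs ! i), fs i)) [0..<length qs]"]
  by (simp add: case_family_def comp_def)

lemma step_Cut_Sel_case_family:
  "i < length qs \<Longrightarrow> step (Cut \<gamma> (Sel \<gamma> (fst (qs ! i)) f) (case_family \<gamma> qs gs)) (Cut \<gamma> f (gs i))"
  unfolding case_family_def by (rule step.r11) force

lemma step_Cut_case_family_Sel:
  "i < length qs \<Longrightarrow> step (Cut \<gamma> (case_family \<gamma> qs fs) (Sel \<gamma> (fst (qs ! i)) g)) (Cut \<gamma> (fs i) g)"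
  unfolding case_family_def by (rule step.r12) force

lemma sim_case_family_Sum:
  assumes "seq_ok (\<Gamma>(\<alpha> \<mapsto> Sum qs)) \<Delta>" and "\<alpha> \<notin> dom \<Gamma>"
    and "\<And>i. i < length qs \<Longrightarrow> sim src tgt (\<Gamma>(\<alpha> \<mapsto> snd (qs ! i))) \<Delta> (fs i) (gs i)"
  shows "sim src tgt (\<Gamma>(\<alpha> \<mapsto> Sum qs)) \<Delta> (case_family \<alpha> qs fs) (case_family \<alpha> qs gs)"
  using assms(3) tp_case_family_Sum[OF assms(1,2)] by (rule sim_case_family)

lemma sim_case_family_Prod:
  assumes "seq_ok \<Gamma> (\<Delta>(\<alpha> \<mapsto> Prod qs))" and "\<alpha> \<notin> dom \<Delta>"
    and "\<And>i. i < length qs \<Longrightarrow> sim src tgt \<Gamma> (\<Delta>(\<alpha> \<mapsto> snd (qs ! i))) (fs i) (gs i)"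
  shows "sim src tgt \<Gamma> (\<Delta>(\<alpha> \<mapsto> Prod qs)) (case_family \<alpha> qs fs) (case_family \<alpha> qs gs)"
  using assms(3) tp_case_family_Prod[OF assms(1,2)] by (rule sim_case_family)

context
  assumes infinite_chans: "infinite (UNIV :: 'c set)"
begin

lemma ex_fresh_chan:
  assumes "finite (A :: 'c set)"
  obtains x where "x \<notin> A"
  using ex_new_if_finite[OF infinite_chans assms] by blast

lemma ex_identities:
  fixes x y :: 'c
  assumes "\<forall>p\<in>set qs. wf_fm (snd p)" and "x \<noteq> y"
  obtains ts :: "('a, 'm, 'e, 'c) tm list" where "length ts = length qs"
    and "\<And>i. i < length qs \<Longrightarrow>
      is_id (snd (qs ! i)) x y (ts ! i) \<and> tp src tgt (ts ! i) [x \<mapsto> snd (qs ! i)] [y \<mapsto> snd (qs ! i)]"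
proof -
  have "\<exists>t. is_id (snd (qs ! i)) x y t \<and> tp src tgt t [x \<mapsto> snd (qs ! i)] [y \<mapsto> snd (qs ! i)]"
    if "i < length qs" for i
    using ex_identity[OF infinite_chans _ assms(2)] assms(1) that by (metis nth_mem)
  then obtain ts where "length ts = length qs" "\<And>i. i < length qs \<Longrightarrow>
      is_id (snd (qs ! i)) x y (ts ! i) \<and> tp src tgt (ts ! i) [x \<mapsto> snd (qs ! i)] [y \<mapsto> snd (qs ! i)]"
    by (rule list_choice) auto
  then show thesis by (rule that)
qed

lemma sim_unrename_left:
  fixes \<alpha> \<beta> :: 'c
  assumes "wf_fm X" and "sim src tgt (\<Gamma>(\<beta> \<mapsto> X)) \<Delta> (ren \<alpha> \<beta> u) (ren \<alpha> \<beta> v)"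
    and "tp src tgt u (\<Gamma>(\<alpha> \<mapsto> X)) \<Delta>" and "tp src tgt v (\<Gamma>(\<alpha> \<mapsto> X)) \<Delta>"
    and "\<beta> \<notin> chans u" and "\<beta> \<notin> chans v" and "\<alpha> \<noteq> \<beta>"
    and "\<alpha> \<notin> dom \<Gamma> \<union> dom \<Delta>" and "\<beta> \<notin> dom \<Gamma> \<union> dom \<Delta>"
  shows "sim src tgt (\<Gamma>(\<alpha> \<mapsto> X)) \<Delta> u v"
proof -
  obtain \<iota> where \<iota>: "is_id X \<alpha> \<beta> \<iota>" "tp src tgt \<iota> [\<alpha> \<mapsto> X] [\<beta> \<mapsto> X]"
    using ex_identity[OF infinite_chans assms(1,7)] by blast
  have undo: "sim src tgt (\<Gamma>(\<alpha> \<mapsto> X)) \<Delta> (Cut \<beta> \<iota> (ren \<alpha> \<beta> w)) w"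
    if "tp src tgt w (\<Gamma>(\<alpha> \<mapsto> X)) \<Delta>" and "\<beta> \<notin> chans w" for w
    using sim_Cut_identity_left[OF \<iota> tp_ren_left[OF that] notin_chans_ren] that(2) assms(7-9)
    by (auto simp: ren_ren)
  have "sim src tgt (\<Gamma>(\<alpha> \<mapsto> X)) \<Delta> (Cut \<beta> \<iota> (ren \<alpha> \<beta> u)) (Cut \<beta> \<iota> (ren \<alpha> \<beta> v))"
    using assms(7-9) by (intro sim_Cut_right[OF assms(2)] tp_Cut_unary_left[OF \<iota>(2)]) auto
  then show ?thesis
    using undo[OF assms(3,5)] undo[OF assms(4,6)] by (blast intro: sim_trans sim_sym)
qed

lemma sim_unrename_right:
  fixes \<alpha> \<beta> :: 'c
  assumes "wf_fm X" and "sim src tgt \<Gamma> (\<Delta>(\<beta> \<mapsto> X)) (ren \<alpha> \<beta> u) (ren \<alpha> \<beta> v)"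
    and "tp src tgt u \<Gamma> (\<Delta>(\<alpha> \<mapsto> X))" and "tp src tgt v \<Gamma> (\<Delta>(\<alpha> \<mapsto> X))"
    and "\<beta> \<notin> chans u" and "\<beta> \<notin> chans v" and "\<alpha> \<noteq> \<beta>"
    and "\<alpha> \<notin> dom \<Gamma> \<union> dom \<Delta>" and "\<beta> \<notin> dom \<Gamma> \<union> dom \<Delta>"
  shows "sim src tgt \<Gamma> (\<Delta>(\<alpha> \<mapsto> X)) u v"
proof -
  obtain \<iota> where \<iota>: "is_id X \<beta> \<alpha> \<iota>" "tp src tgt \<iota> [\<beta> \<mapsto> X] [\<alpha> \<mapsto> X]"
    using ex_identity[OF infinite_chans assms(1) assms(7)[symmetric]] by blast
  have undo: "sim src tgt \<Gamma> (\<Delta>(\<alpha> \<mapsto> X)) (Cut \<beta> (ren \<alpha> \<beta> w) \<iota>) w"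
    if "tp src tgt w \<Gamma> (\<Delta>(\<alpha> \<mapsto> X))" and "\<beta> \<notin> chans w" for w
    using sim_Cut_identity_right[OF \<iota> tp_ren_right[OF that] notin_chans_ren] that(2) assms(7-9)
    by (auto simp: ren_ren)
  have "sim src tgt \<Gamma> (\<Delta>(\<alpha> \<mapsto> X)) (Cut \<beta> (ren \<alpha> \<beta> u) \<iota>) (Cut \<beta> (ren \<alpha> \<beta> v) \<iota>)"
    using assms(7-9) by (intro sim_Cut_left[OF assms(2)] tp_Cut_unary_right[OF _ \<iota>(2)]) auto
  then show ?thesis
    using undo[OF assms(3,5)] undo[OF assms(4,6)] by (blast intro: sim_trans sim_sym)
qed

text \<open>Eta-expansion: \<open>t\<close> is cut against the identity on the sum (after renaming \<open>\<alpha>\<close> in \<open>t\<close> to a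
  fresh \<open>\<gamma>\<close>); that identity is a cotuple of injections, so rule (3) splits the cut into branches.\<close>

lemma Sum_eta:
  fixes \<alpha> :: 'c
  assumes so: "seq_ok (\<Gamma>(\<alpha> \<mapsto> Sum qs)) \<Delta>" and \<alpha>: "\<alpha> \<notin> dom \<Gamma>"
    and t: "tp src tgt t (\<Gamma>(\<alpha> \<mapsto> Sum qs)) \<Delta>"
  shows "\<exists>fs. (\<forall>i<length qs. tp src tgt (fs i) (\<Gamma>(\<alpha> \<mapsto> snd (qs ! i))) \<Delta>) \<and>
    sim src tgt (\<Gamma>(\<alpha> \<mapsto> Sum qs)) \<Delta> t (case_family \<alpha> qs fs)"
proof -
  have wf: "wf_fm (Sum qs)" using so by (rule seq_ok_wf_left)
  have "\<alpha> \<notin> dom \<Delta>" using seq_ok_update_leftD[OF so] by simp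
  have "finite (chans t \<union> dom \<Gamma> \<union> dom \<Delta> \<union> {\<alpha>})"
    using seq_ok_update_leftD[OF so] tp_finite_chans[OF t] by simp
  then obtain \<gamma> where \<gamma>: "\<gamma> \<notin> chans t \<union> dom \<Gamma> \<union> dom \<Delta> \<union> {\<alpha>}" by (rule ex_fresh_chan)
  define t' where "t' = ren \<alpha> \<gamma> t"
  have t': "tp src tgt t' (\<Gamma>(\<gamma> \<mapsto> Sum qs)) \<Delta>"
    unfolding t'_def using \<gamma> \<alpha> \<open>\<alpha> \<notin> dom \<Delta>\<close> by (intro tp_ren_left[OF t]) auto
  have "\<forall>p\<in>set qs. wf_fm (snd p)" and "\<alpha> \<noteq> \<gamma>" using wf \<gamma> by (auto simp: wf_fm_Sum_iff)
  then obtain ts where ts: "length ts = length qs" "\<And>i. i < length qs \<Longrightarrow>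
      is_id (snd (qs ! i)) \<alpha> \<gamma> (ts ! i) \<and> tp src tgt (ts ! i) [\<alpha> \<mapsto> snd (qs ! i)] [\<gamma> \<mapsto> snd (qs ! i)]"
    by (rule ex_identities[where src = src and tgt = tgt]) blast
  define inj where "inj i = Sel \<gamma> (fst (qs ! i)) (ts ! i)" for i
  have inj_tp: "tp src tgt (inj i) [\<alpha> \<mapsto> snd (qs ! i)] [\<gamma> \<mapsto> Sum qs]" if "i < length qs" for i
    unfolding inj_def using ts(2)[OF that] that by (intro tp_Sel_Sum[OF wf, where \<Delta> = Map.empty]) auto
  have ident: "is_id (Sum qs) \<alpha> \<gamma> (case_family \<alpha> qs inj)"
    and ident_tp: "tp src tgt (case_family \<alpha> qs inj) [\<alpha> \<mapsto> Sum qs] [\<gamma> \<mapsto> Sum qs]"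
    using identity_Sum[OF wf _ ts] \<gamma> unfolding inj_def by auto
  have cut_identity: "sim src tgt (\<Gamma>(\<alpha> \<mapsto> Sum qs)) \<Delta> (Cut \<gamma> (case_family \<alpha> qs inj) t') t"
    using sim_Cut_identity_left[OF ident ident_tp t'] \<gamma> \<alpha> \<open>\<alpha> \<notin> dom \<Delta>\<close>
    by (auto simp: t'_def ren_ren notin_chans_ren)
  have branch_tp: "tp src tgt (Cut \<gamma> (inj i) t') (\<Gamma>(\<alpha> \<mapsto> snd (qs ! i))) \<Delta>" if "i < length qs" for i
    using \<gamma> \<alpha> \<open>\<alpha> \<notin> dom \<Delta>\<close> by (intro tp_Cut_unary_left[OF inj_tp[OF that] t']) auto
  have "sim src tgt (\<Gamma>(\<alpha> \<mapsto> Sum qs)) \<Delta> (Cut \<gamma> (case_family \<alpha> qs inj) t')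
      (case_family \<alpha> qs (\<lambda>i. Cut \<gamma> (inj i) t'))"
  proof (rule step_sim[OF _ _ step_Cut_case_family_left])
    show "tp src tgt (Cut \<gamma> (case_family \<alpha> qs inj) t') (\<Gamma>(\<alpha> \<mapsto> Sum qs)) \<Delta>"
      using \<gamma> \<alpha> \<open>\<alpha> \<notin> dom \<Delta>\<close> by (intro tp_Cut_unary_left[OF ident_tp t']) auto
    show "tp src tgt (case_family \<alpha> qs (\<lambda>i. Cut \<gamma> (inj i) t')) (\<Gamma>(\<alpha> \<mapsto> Sum qs)) \<Delta>"
      using branch_tp by (rule tp_case_family_Sum[OF so \<alpha>])
  qed (use \<gamma> in auto)
  then have "sim src tgt (\<Gamma>(\<alpha> \<mapsto> Sum qs)) \<Delta> t (case_family \<alpha> qs (\<lambda>i. Cut \<gamma> (inj i) t'))"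
    by (rule sim_trans[OF sim_sym[OF cut_identity]])
  with branch_tp show ?thesis by (intro exI[where x = "\<lambda>i. Cut \<gamma> (inj i) t'"]) blast
qed

text \<open>Precomposing with the \<open>i\<close>-th injection (from a fresh \<open>\<beta>\<close>) selects the \<open>i\<close>-th branch by
  rules (11) and (2), up to the renaming of \<open>\<alpha>\<close> to \<open>\<beta>\<close>.\<close>

lemma Sum_inj:
  fixes \<alpha> :: 'c
  assumes so: "seq_ok (\<Gamma>(\<alpha> \<mapsto> Sum qs)) \<Delta>" and \<alpha>: "\<alpha> \<notin> dom \<Gamma>" and i: "i < length qs"
    and fs: "\<And>j. j < length qs \<Longrightarrow> tp src tgt (fs j) (\<Gamma>(\<alpha> \<mapsto> snd (qs ! j))) \<Delta>"
    and gs: "\<And>j. j < length qs \<Longrightarrow> tp src tgt (gs j) (\<Gamma>(\<alpha> \<mapsto> snd (qs ! j))) \<Delta>"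
    and eq: "sim src tgt (\<Gamma>(\<alpha> \<mapsto> Sum qs)) \<Delta> (case_family \<alpha> qs fs) (case_family \<alpha> qs gs)"
  shows "sim src tgt (\<Gamma>(\<alpha> \<mapsto> snd (qs ! i))) \<Delta> (fs i) (gs i)"
proof -
  let ?X = "snd (qs ! i)"
  have wf: "wf_fm (Sum qs)" using so by (rule seq_ok_wf_left)
  then have wf_X: "wf_fm ?X" using i by (simp add: wf_fm_Sum_iff)
  have "\<alpha> \<notin> dom \<Delta>" using seq_ok_update_leftD[OF so] by simp
  have "finite (chans (fs i) \<union> chans (gs i) \<union> dom \<Gamma> \<union> dom \<Delta> \<union> {\<alpha>})"
    using seq_ok_update_leftD[OF so] tp_finite_chans[OF fs[OF i]] tp_finite_chans[OF gs[OF i]] by simp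
  then obtain \<beta> where \<beta>: "\<beta> \<notin> chans (fs i) \<union> chans (gs i) \<union> dom \<Gamma> \<union> dom \<Delta> \<union> {\<alpha>}"
    by (rule ex_fresh_chan)
  then obtain \<iota> where \<iota>: "is_id ?X \<beta> \<alpha> \<iota>" "tp src tgt \<iota> [\<beta> \<mapsto> ?X] [\<alpha> \<mapsto> ?X]"
    using ex_identity[OF infinite_chans wf_X, of \<beta> \<alpha>] by blast
  let ?inj = "Sel \<alpha> (fst (qs ! i)) \<iota>"
  have inj_tp: "tp src tgt ?inj [\<beta> \<mapsto> ?X] [\<alpha> \<mapsto> Sum qs]"
    using \<iota>(2) i by (intro tp_Sel_Sum[OF wf, where \<Delta> = Map.empty]) auto
  have Cut_inj_tp: "tp src tgt (Cut \<alpha> ?inj v) (\<Gamma>(\<beta> \<mapsto> ?X)) \<Delta>"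
    if "tp src tgt v (\<Gamma>(\<alpha> \<mapsto> Sum qs)) \<Delta>" for v
    using \<beta> \<alpha> \<open>\<alpha> \<notin> dom \<Delta>\<close> by (intro tp_Cut_unary_left[OF inj_tp that]) auto
  have inj_case: "sim src tgt (\<Gamma>(\<beta> \<mapsto> ?X)) \<Delta> (Cut \<alpha> ?inj (case_family \<alpha> qs us)) (ren \<alpha> \<beta> (us i))"
    if us: "\<And>j. j < length qs \<Longrightarrow> tp src tgt (us j) (\<Gamma>(\<alpha> \<mapsto> snd (qs ! j))) \<Delta>"
      and "\<beta> \<notin> chans (us i)" for us
  proof -
    have "sim src tgt (\<Gamma>(\<beta> \<mapsto> ?X)) \<Delta> (Cut \<alpha> ?inj (case_family \<alpha> qs us)) (Cut \<alpha> \<iota> (us i))"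
    proof (rule step_sim[OF _ _ step_Cut_Sel_case_family[OF i]])
      show "tp src tgt (Cut \<alpha> ?inj (case_family \<alpha> qs us)) (\<Gamma>(\<beta> \<mapsto> ?X)) \<Delta>"
        by (rule Cut_inj_tp[OF tp_case_family_Sum[OF so \<alpha> us]])
      show "tp src tgt (Cut \<alpha> \<iota> (us i)) (\<Gamma>(\<beta> \<mapsto> ?X)) \<Delta>"
        using \<beta> \<alpha> \<open>\<alpha> \<notin> dom \<Delta>\<close> by (intro tp_Cut_unary_left[OF \<iota>(2) us[OF i]]) auto
    qed
    also have "sim src tgt (\<Gamma>(\<beta> \<mapsto> ?X)) \<Delta> (Cut \<alpha> \<iota> (us i)) (ren \<alpha> \<beta> (us i))"
      using \<beta> \<alpha> \<open>\<alpha> \<notin> dom \<Delta>\<close> that(2) by (intro sim_Cut_identity_left[OF \<iota> us[OF i]]) auto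
    finally show ?thesis .
  qed
  have "sim src tgt (\<Gamma>(\<beta> \<mapsto> ?X)) \<Delta> (Cut \<alpha> ?inj (case_family \<alpha> qs fs)) (Cut \<alpha> ?inj (case_family \<alpha> qs gs))"
    using eq Cut_inj_tp by (rule sim_Cut_right)
  then have "sim src tgt (\<Gamma>(\<beta> \<mapsto> ?X)) \<Delta> (ren \<alpha> \<beta> (fs i)) (ren \<alpha> \<beta> (gs i))"
    using \<beta> sim_trans[OF sim_sym[OF inj_case[OF fs]]] sim_trans[OF _ inj_case[OF gs]] by blast
  then show ?thesis
    by (rule sim_unrename_left[OF wf_X _ fs[OF i] gs[OF i]]) (use \<beta> \<alpha> \<open>\<alpha> \<notin> dom \<Delta>\<close> in auto)
qed

lemma Prod_eta:
  fixes \<alpha> :: 'c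
  assumes so: "seq_ok \<Gamma> (\<Delta>(\<alpha> \<mapsto> Prod qs))" and \<alpha>: "\<alpha> \<notin> dom \<Delta>"
    and t: "tp src tgt t \<Gamma> (\<Delta>(\<alpha> \<mapsto> Prod qs))"
  shows "\<exists>fs. (\<forall>i<length qs. tp src tgt (fs i) \<Gamma> (\<Delta>(\<alpha> \<mapsto> snd (qs ! i)))) \<and>
    sim src tgt \<Gamma> (\<Delta>(\<alpha> \<mapsto> Prod qs)) t (case_family \<alpha> qs fs)"
proof -
  have wf: "wf_fm (Prod qs)" using so by (rule seq_ok_wf_right)
  have "\<alpha> \<notin> dom \<Gamma>" using seq_ok_update_rightD[OF so] by simp
  have "finite (chans t \<union> dom \<Gamma> \<union> dom \<Delta> \<union> {\<alpha>})"
    using seq_ok_update_rightD[OF so] tp_finite_chans[OF t] by simp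
  then obtain \<gamma> where \<gamma>: "\<gamma> \<notin> chans t \<union> dom \<Gamma> \<union> dom \<Delta> \<union> {\<alpha>}" by (rule ex_fresh_chan)
  define t' where "t' = ren \<alpha> \<gamma> t"
  have t': "tp src tgt t' \<Gamma> (\<Delta>(\<gamma> \<mapsto> Prod qs))"
    unfolding t'_def using \<gamma> \<alpha> \<open>\<alpha> \<notin> dom \<Gamma>\<close> by (intro tp_ren_right[OF t]) auto
  have "\<forall>p\<in>set qs. wf_fm (snd p)" and "\<gamma> \<noteq> \<alpha>" using wf \<gamma> by (auto simp: wf_fm_Prod_iff)
  then obtain ts where ts: "length ts = length qs" "\<And>i. i < length qs \<Longrightarrow>
      is_id (snd (qs ! i)) \<gamma> \<alpha> (ts ! i) \<and> tp src tgt (ts ! i) [\<gamma> \<mapsto> snd (qs ! i)] [\<alpha> \<mapsto> snd (qs ! i)]"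
    by (rule ex_identities[where src = src and tgt = tgt]) blast
  define proj where "proj i = Sel \<gamma> (fst (qs ! i)) (ts ! i)" for i
  have proj_tp: "tp src tgt (proj i) [\<gamma> \<mapsto> Prod qs] [\<alpha> \<mapsto> snd (qs ! i)]" if "i < length qs" for i
    unfolding proj_def using ts(2)[OF that] that by (intro tp_Sel_Prod[OF wf, where \<Gamma> = Map.empty]) auto
  have ident: "is_id (Prod qs) \<gamma> \<alpha> (case_family \<alpha> qs proj)"
    and ident_tp: "tp src tgt (case_family \<alpha> qs proj) [\<gamma> \<mapsto> Prod qs] [\<alpha> \<mapsto> Prod qs]"
    using identity_Prod[OF wf _ ts] \<gamma> unfolding proj_def by auto
  have cut_identity: "sim src tgt \<Gamma> (\<Delta>(\<alpha> \<mapsto> Prod qs)) (Cut \<gamma> t' (case_family \<alpha> qs proj)) t"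
    using sim_Cut_identity_right[OF ident ident_tp t'] \<gamma> \<alpha> \<open>\<alpha> \<notin> dom \<Gamma>\<close>
    by (auto simp: t'_def ren_ren notin_chans_ren)
  have branch_tp: "tp src tgt (Cut \<gamma> t' (proj i)) \<Gamma> (\<Delta>(\<alpha> \<mapsto> snd (qs ! i)))" if "i < length qs" for i
    using \<gamma> \<alpha> \<open>\<alpha> \<notin> dom \<Gamma>\<close> by (intro tp_Cut_unary_right[OF t' proj_tp[OF that]]) auto
  have "sim src tgt \<Gamma> (\<Delta>(\<alpha> \<mapsto> Prod qs)) (Cut \<gamma> t' (case_family \<alpha> qs proj))
      (case_family \<alpha> qs (\<lambda>i. Cut \<gamma> t' (proj i)))"
  proof (rule step_sim[OF _ _ step_Cut_case_family_right])
    show "tp src tgt (Cut \<gamma> t' (case_family \<alpha> qs proj)) \<Gamma> (\<Delta>(\<alpha> \<mapsto> Prod qs))"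
      using \<gamma> \<alpha> \<open>\<alpha> \<notin> dom \<Gamma>\<close> by (intro tp_Cut_unary_right[OF t' ident_tp]) auto
    show "tp src tgt (case_family \<alpha> qs (\<lambda>i. Cut \<gamma> t' (proj i))) \<Gamma> (\<Delta>(\<alpha> \<mapsto> Prod qs))"
      using branch_tp by (rule tp_case_family_Prod[OF so \<alpha>])
  qed (use \<gamma> in auto)
  then have "sim src tgt \<Gamma> (\<Delta>(\<alpha> \<mapsto> Prod qs)) t (case_family \<alpha> qs (\<lambda>i. Cut \<gamma> t' (proj i)))"
    by (rule sim_trans[OF sim_sym[OF cut_identity]])
  with branch_tp show ?thesis by (intro exI[where x = "\<lambda>i. Cut \<gamma> t' (proj i)"]) blast
qed

lemma Prod_inj:
  fixes \<alpha> :: 'c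
  assumes so: "seq_ok \<Gamma> (\<Delta>(\<alpha> \<mapsto> Prod qs))" and \<alpha>: "\<alpha> \<notin> dom \<Delta>" and i: "i < length qs"
    and fs: "\<And>j. j < length qs \<Longrightarrow> tp src tgt (fs j) \<Gamma> (\<Delta>(\<alpha> \<mapsto> snd (qs ! j)))"
    and gs: "\<And>j. j < length qs \<Longrightarrow> tp src tgt (gs j) \<Gamma> (\<Delta>(\<alpha> \<mapsto> snd (qs ! j)))"
    and eq: "sim src tgt \<Gamma> (\<Delta>(\<alpha> \<mapsto> Prod qs)) (case_family \<alpha> qs fs) (case_family \<alpha> qs gs)"
  shows "sim src tgt \<Gamma> (\<Delta>(\<alpha> \<mapsto> snd (qs ! i))) (fs i) (gs i)"
proof -
  let ?X = "snd (qs ! i)"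
  have wf: "wf_fm (Prod qs)" using so by (rule seq_ok_wf_right)
  then have wf_X: "wf_fm ?X" using i by (simp add: wf_fm_Prod_iff)
  have "\<alpha> \<notin> dom \<Gamma>" using seq_ok_update_rightD[OF so] by simp
  have "finite (chans (fs i) \<union> chans (gs i) \<union> dom \<Gamma> \<union> dom \<Delta> \<union> {\<alpha>})"
    using seq_ok_update_rightD[OF so] tp_finite_chans[OF fs[OF i]] tp_finite_chans[OF gs[OF i]] by simp
  then obtain \<beta> where \<beta>: "\<beta> \<notin> chans (fs i) \<union> chans (gs i) \<union> dom \<Gamma> \<union> dom \<Delta> \<union> {\<alpha>}"
    by (rule ex_fresh_chan)
  then obtain \<iota> where \<iota>: "is_id ?X \<alpha> \<beta> \<iota>" "tp src tgt \<iota> [\<alpha> \<mapsto> ?X] [\<beta> \<mapsto> ?X]"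
    using ex_identity[OF infinite_chans wf_X, of \<alpha> \<beta>] by blast
  let ?proj = "Sel \<alpha> (fst (qs ! i)) \<iota>"
  have proj_tp: "tp src tgt ?proj [\<alpha> \<mapsto> Prod qs] [\<beta> \<mapsto> ?X]"
    using \<iota>(2) i by (intro tp_Sel_Prod[OF wf, where \<Gamma> = Map.empty]) auto
  have Cut_proj_tp: "tp src tgt (Cut \<alpha> v ?proj) \<Gamma> (\<Delta>(\<beta> \<mapsto> ?X))"
    if "tp src tgt v \<Gamma> (\<Delta>(\<alpha> \<mapsto> Prod qs))" for v
    using \<beta> \<alpha> \<open>\<alpha> \<notin> dom \<Gamma>\<close> by (intro tp_Cut_unary_right[OF that proj_tp]) auto
  have case_proj: "sim src tgt \<Gamma> (\<Delta>(\<beta> \<mapsto> ?X)) (Cut \<alpha> (case_family \<alpha> qs us) ?proj) (ren \<alpha> \<beta> (us i))"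
    if us: "\<And>j. j < length qs \<Longrightarrow> tp src tgt (us j) \<Gamma> (\<Delta>(\<alpha> \<mapsto> snd (qs ! j)))"
      and "\<beta> \<notin> chans (us i)" for us
  proof -
    have "sim src tgt \<Gamma> (\<Delta>(\<beta> \<mapsto> ?X)) (Cut \<alpha> (case_family \<alpha> qs us) ?proj) (Cut \<alpha> (us i) \<iota>)"
    proof (rule step_sim[OF _ _ step_Cut_case_family_Sel[OF i]])
      show "tp src tgt (Cut \<alpha> (case_family \<alpha> qs us) ?proj) \<Gamma> (\<Delta>(\<beta> \<mapsto> ?X))"
        by (rule Cut_proj_tp[OF tp_case_family_Prod[OF so \<alpha> us]])
      show "tp src tgt (Cut \<alpha> (us i) \<iota>) \<Gamma> (\<Delta>(\<beta> \<mapsto> ?X))"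
        using \<beta> \<alpha> \<open>\<alpha> \<notin> dom \<Gamma>\<close> by (intro tp_Cut_unary_right[OF us[OF i] \<iota>(2)]) auto
    qed
    also have "sim src tgt \<Gamma> (\<Delta>(\<beta> \<mapsto> ?X)) (Cut \<alpha> (us i) \<iota>) (ren \<alpha> \<beta> (us i))"
      using \<beta> \<alpha> \<open>\<alpha> \<notin> dom \<Gamma>\<close> that(2) by (intro sim_Cut_identity_right[OF \<iota> us[OF i]]) auto
    finally show ?thesis .
  qed
  have "sim src tgt \<Gamma> (\<Delta>(\<beta> \<mapsto> ?X)) (Cut \<alpha> (case_family \<alpha> qs fs) ?proj) (Cut \<alpha> (case_family \<alpha> qs gs) ?proj)"
    using eq Cut_proj_tp by (rule sim_Cut_left)
  then have "sim src tgt \<Gamma> (\<Delta>(\<beta> \<mapsto> ?X)) (ren \<alpha> \<beta> (fs i)) (ren \<alpha> \<beta> (gs i))"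
    using \<beta> sim_trans[OF sim_sym[OF case_proj[OF fs]]] sim_trans[OF _ case_proj[OF gs]] by blast
  then show ?thesis
    by (rule sim_unrename_right[OF wf_X _ fs[OF i] gs[OF i]]) (use \<beta> \<alpha> \<open>\<alpha> \<notin> dom \<Gamma>\<close> in auto)
qed

lemma bij_betw_hom_Sum:
  fixes \<alpha> :: 'c
  assumes so: "seq_ok (\<Gamma>(\<alpha> \<mapsto> Sum qs)) \<Delta>" and \<alpha>: "\<alpha> \<notin> dom \<Gamma>"
  shows "bij_betw (\<lambda>F. cls src tgt (\<Gamma>(\<alpha> \<mapsto> Sum qs)) \<Delta> (case_family \<alpha> qs (\<lambda>i. repr (F i))))
    (Pi\<^sub>E {..<length (map snd qs)} (\<lambda>i. hom src tgt (\<Gamma>(\<alpha> \<mapsto> map snd qs ! i)) \<Delta>))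
    (hom src tgt (\<Gamma>(\<alpha> \<mapsto> Sum qs)) \<Delta>)"
proof (rule bij_betw_hom_family)
  show K_tp: "tp src tgt (case_family \<alpha> qs fs) (\<Gamma>(\<alpha> \<mapsto> Sum qs)) \<Delta>"
    if "\<And>i. i < length (map snd qs) \<Longrightarrow> tp src tgt (fs i) (\<Gamma>(\<alpha> \<mapsto> map snd qs ! i)) \<Delta>" for fs
    using that by (intro tp_case_family_Sum[OF so \<alpha>]) simp
  show "sim src tgt (\<Gamma>(\<alpha> \<mapsto> Sum qs)) \<Delta> (case_family \<alpha> qs fs) (case_family \<alpha> qs gs)"
    if "\<And>i. i < length (map snd qs) \<Longrightarrow> sim src tgt (\<Gamma>(\<alpha> \<mapsto> map snd qs ! i)) \<Delta> (fs i) (gs i)" for fs gs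
    using that by (intro sim_case_family[where G = "\<lambda>i. \<Gamma>(\<alpha> \<mapsto> map snd qs ! i)"] K_tp) auto
  show "sim src tgt (\<Gamma>(\<alpha> \<mapsto> map snd qs ! i)) \<Delta> (fs i) (gs i)"
    if "\<And>i. i < length (map snd qs) \<Longrightarrow> tp src tgt (fs i) (\<Gamma>(\<alpha> \<mapsto> map snd qs ! i)) \<Delta>"
      and "\<And>i. i < length (map snd qs) \<Longrightarrow> tp src tgt (gs i) (\<Gamma>(\<alpha> \<mapsto> map snd qs ! i)) \<Delta>"
      and "sim src tgt (\<Gamma>(\<alpha> \<mapsto> Sum qs)) \<Delta> (case_family \<alpha> qs fs) (case_family \<alpha> qs gs)"
      and "i < length (map snd qs)" for fs gs i
    using that by (simp add: Sum_inj[OF so \<alpha>])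
  show "\<exists>fs. (\<forall>i<length (map snd qs). tp src tgt (fs i) (\<Gamma>(\<alpha> \<mapsto> map snd qs ! i)) \<Delta>) \<and>
      sim src tgt (\<Gamma>(\<alpha> \<mapsto> Sum qs)) \<Delta> t (case_family \<alpha> qs fs)"
    if "tp src tgt t (\<Gamma>(\<alpha> \<mapsto> Sum qs)) \<Delta>" for t
    using Sum_eta[OF so \<alpha> that] by simp
qed

lemma bij_betw_hom_Prod:
  fixes \<alpha> :: 'c
  assumes so: "seq_ok \<Gamma> (\<Delta>(\<alpha> \<mapsto> Prod qs))" and \<alpha>: "\<alpha> \<notin> dom \<Delta>"
  shows "bij_betw (\<lambda>F. cls src tgt \<Gamma> (\<Delta>(\<alpha> \<mapsto> Prod qs)) (case_family \<alpha> qs (\<lambda>i. repr (F i))))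
    (Pi\<^sub>E {..<length (map snd qs)} (\<lambda>i. hom src tgt \<Gamma> (\<Delta>(\<alpha> \<mapsto> map snd qs ! i))))
    (hom src tgt \<Gamma> (\<Delta>(\<alpha> \<mapsto> Prod qs)))"
proof (rule bij_betw_hom_family)
  show K_tp: "tp src tgt (case_family \<alpha> qs fs) \<Gamma> (\<Delta>(\<alpha> \<mapsto> Prod qs))"
    if "\<And>i. i < length (map snd qs) \<Longrightarrow> tp src tgt (fs i) \<Gamma> (\<Delta>(\<alpha> \<mapsto> map snd qs ! i))" for fs
    using that by (intro tp_case_family_Prod[OF so \<alpha>]) simp
  show "sim src tgt \<Gamma> (\<Delta>(\<alpha> \<mapsto> Prod qs)) (case_family \<alpha> qs fs) (case_family \<alpha> qs gs)"
    if "\<And>i. i < length (map snd qs) \<Longrightarrow> sim src tgt \<Gamma> (\<Delta>(\<alpha> \<mapsto> map snd qs ! i)) (fs i) (gs i)" for fs gs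
    using that by (intro sim_case_family[where D = "\<lambda>i. \<Delta>(\<alpha> \<mapsto> map snd qs ! i)"] K_tp) auto
  show "sim src tgt \<Gamma> (\<Delta>(\<alpha> \<mapsto> map snd qs ! i)) (fs i) (gs i)"
    if "\<And>i. i < length (map snd qs) \<Longrightarrow> tp src tgt (fs i) \<Gamma> (\<Delta>(\<alpha> \<mapsto> map snd qs ! i))"
      and "\<And>i. i < length (map snd qs) \<Longrightarrow> tp src tgt (gs i) \<Gamma> (\<Delta>(\<alpha> \<mapsto> map snd qs ! i))"
      and "sim src tgt \<Gamma> (\<Delta>(\<alpha> \<mapsto> Prod qs)) (case_family \<alpha> qs fs) (case_family \<alpha> qs gs)"
      and "i < length (map snd qs)" for fs gs i
    using that by (simp add: Prod_inj[OF so \<alpha>])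
  show "\<exists>fs. (\<forall>i<length (map snd qs). tp src tgt (fs i) \<Gamma> (\<Delta>(\<alpha> \<mapsto> map snd qs ! i))) \<and>
      sim src tgt \<Gamma> (\<Delta>(\<alpha> \<mapsto> Prod qs)) t (case_family \<alpha> qs fs)"
    if "tp src tgt t \<Gamma> (\<Delta>(\<alpha> \<mapsto> Prod qs))" for t
    using Prod_eta[OF so \<alpha> that] by simp
qed

lemma Sum_natural_left:
  fixes \<alpha> :: 'c
  assumes so: "seq_ok (\<Gamma>(\<alpha> \<mapsto> Sum qs)) \<Delta>" and \<alpha>: "\<alpha> \<notin> dom \<Gamma>" and "\<gamma> \<noteq> \<alpha>" and "\<Gamma> \<gamma> = Some Z"
    and h: "tp src tgt h \<Gamma>0 (\<Delta>0(\<gamma> \<mapsto> Z))" and "\<gamma> \<notin> dom \<Gamma>0 \<union> dom \<Delta>0"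
    and dj: "(dom \<Gamma>0 \<union> dom \<Delta>0) \<inter> (dom \<Gamma> \<union> dom \<Delta> \<union> {\<alpha>}) = {}"
    and fs: "\<forall>i < length (map snd qs). tp src tgt (fs i) (\<Gamma>(\<alpha> \<mapsto> map snd qs ! i)) \<Delta>"
    and t: "t \<in> cls src tgt (\<Gamma>(\<alpha> \<mapsto> Sum qs)) \<Delta> (case_family \<alpha> qs (\<lambda>i. repr
              ((\<lambda>i\<in>{..<length (map snd qs)}. cls src tgt (\<Gamma>(\<alpha> \<mapsto> map snd qs ! i)) \<Delta> (fs i)) i)))"
  shows "cls src tgt ((\<Gamma>0 ++ \<Gamma>(\<gamma> := None))(\<alpha> \<mapsto> Sum qs)) (\<Delta>0 ++ \<Delta>) (Cut \<gamma> h t) =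
    cls src tgt ((\<Gamma>0 ++ \<Gamma>(\<gamma> := None))(\<alpha> \<mapsto> Sum qs)) (\<Delta>0 ++ \<Delta>) (case_family \<alpha> qs (\<lambda>i. repr
      ((\<lambda>i\<in>{..<length (map snd qs)}. cls src tgt ((\<Gamma>0 ++ \<Gamma>(\<gamma> := None))(\<alpha> \<mapsto> map snd qs ! i))
         (\<Delta>0 ++ \<Delta>) (Cut \<gamma> h (fs i))) i)))"
proof -
  let ?\<Gamma>' = "\<Gamma>0 ++ \<Gamma>(\<gamma> := None)" and ?\<Delta>' = "\<Delta>0 ++ \<Delta>"
  have "\<gamma> \<notin> dom \<Delta>" using so \<open>\<Gamma> \<gamma> = Some Z\<close> \<open>\<gamma> \<noteq> \<alpha>\<close> by (auto simp: seq_ok_def)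
  have Cut_tp: "tp src tgt (Cut \<gamma> h v) (?\<Gamma>'(\<alpha> \<mapsto> X)) ?\<Delta>'" if "tp src tgt v (\<Gamma>(\<alpha> \<mapsto> X)) \<Delta>" for v X
    using tp_Cut_into_left[OF h that] assms(3,4,6) \<open>\<gamma> \<notin> dom \<Delta>\<close> dj by (simp add: fun_upd_twist)
  have "tp src tgt (case_family \<alpha> qs fs) (\<Gamma>(\<alpha> \<mapsto> Sum qs)) \<Delta>"
    using fs by (intro tp_case_family_Sum[OF so \<alpha>]) simp
  then have so': "seq_ok (?\<Gamma>'(\<alpha> \<mapsto> Sum qs)) ?\<Delta>'" by (rule tp_seq_ok[OF Cut_tp])
  have \<alpha>': "\<alpha> \<notin> dom ?\<Gamma>'" using \<alpha> dj by auto
  show ?thesis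
  proof (rule cls_family_natural[where C = "Cut \<gamma> h" and K = "case_family \<alpha> qs" and K' = "case_family \<alpha> qs"
        and G = "\<lambda>i. \<Gamma>(\<alpha> \<mapsto> map snd qs ! i)" and D = "\<lambda>i. \<Delta>"
        and G' = "\<lambda>i. ?\<Gamma>'(\<alpha> \<mapsto> map snd qs ! i)" and D' = "\<lambda>i. ?\<Delta>'", OF Cut_tp Cut_tp])
    show "cstep (Cut \<gamma> h v) (Cut \<gamma> h w)" if "cstep v w" for v w
      using that by (rule cstep.intros)
    show "tp src tgt (case_family \<alpha> qs us) (\<Gamma>(\<alpha> \<mapsto> Sum qs)) \<Delta>"
      if "\<And>i. i < length (map snd qs) \<Longrightarrow> tp src tgt (us i) (\<Gamma>(\<alpha> \<mapsto> map snd qs ! i)) \<Delta>" for us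
      using that by (intro tp_case_family_Sum[OF so \<alpha>]) simp
    show "tp src tgt (case_family \<alpha> qs us) (?\<Gamma>'(\<alpha> \<mapsto> Sum qs)) ?\<Delta>'"
      if "\<And>i. i < length (map snd qs) \<Longrightarrow> tp src tgt (us i) (?\<Gamma>'(\<alpha> \<mapsto> map snd qs ! i)) ?\<Delta>'" for us
      using that by (intro tp_case_family_Sum[OF so' \<alpha>']) simp
    show "sim src tgt (?\<Gamma>'(\<alpha> \<mapsto> Sum qs)) ?\<Delta>' (case_family \<alpha> qs us) (case_family \<alpha> qs vs)"
      if "\<And>i. i < length (map snd qs) \<Longrightarrow> sim src tgt (?\<Gamma>'(\<alpha> \<mapsto> map snd qs ! i)) ?\<Delta>' (us i) (vs i)"
      for us vs
      using that by (intro sim_case_family_Sum[OF so' \<alpha>']) simp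
    show "step (Cut \<gamma> h (case_family \<alpha> qs us)) (case_family \<alpha> qs (\<lambda>i. Cut \<gamma> h (us i)))" for us
      using \<open>\<gamma> \<noteq> \<alpha>\<close> by (intro step_Cut_case_family_right) simp
  qed (use fs t in auto)
qed

lemma Sum_natural_right:
  fixes \<alpha> :: 'c
  assumes so: "seq_ok (\<Gamma>(\<alpha> \<mapsto> Sum qs)) \<Delta>" and \<alpha>: "\<alpha> \<notin> dom \<Gamma>" and "\<gamma> \<noteq> \<alpha>" and "\<Delta> \<gamma> = Some Z"
    and h: "tp src tgt h (\<Gamma>0(\<gamma> \<mapsto> Z)) \<Delta>0" and "\<gamma> \<notin> dom \<Gamma>0 \<union> dom \<Delta>0"
    and dj: "(dom \<Gamma>0 \<union> dom \<Delta>0) \<inter> (dom \<Gamma> \<union> dom \<Delta> \<union> {\<alpha>}) = {}"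
    and fs: "\<forall>i < length (map snd qs). tp src tgt (fs i) (\<Gamma>(\<alpha> \<mapsto> map snd qs ! i)) \<Delta>"
    and t: "t \<in> cls src tgt (\<Gamma>(\<alpha> \<mapsto> Sum qs)) \<Delta> (case_family \<alpha> qs (\<lambda>i. repr
              ((\<lambda>i\<in>{..<length (map snd qs)}. cls src tgt (\<Gamma>(\<alpha> \<mapsto> map snd qs ! i)) \<Delta> (fs i)) i)))"
  shows "cls src tgt ((\<Gamma> ++ \<Gamma>0)(\<alpha> \<mapsto> Sum qs)) (\<Delta>(\<gamma> := None) ++ \<Delta>0) (Cut \<gamma> t h) =
    cls src tgt ((\<Gamma> ++ \<Gamma>0)(\<alpha> \<mapsto> Sum qs)) (\<Delta>(\<gamma> := None) ++ \<Delta>0) (case_family \<alpha> qs (\<lambda>i. repr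
      ((\<lambda>i\<in>{..<length (map snd qs)}. cls src tgt ((\<Gamma> ++ \<Gamma>0)(\<alpha> \<mapsto> map snd qs ! i))
         (\<Delta>(\<gamma> := None) ++ \<Delta>0) (Cut \<gamma> (fs i) h)) i)))"
proof -
  let ?\<Gamma>' = "\<Gamma> ++ \<Gamma>0" and ?\<Delta>' = "\<Delta>(\<gamma> := None) ++ \<Delta>0"
  have "\<gamma> \<notin> dom \<Gamma>" using so \<open>\<Delta> \<gamma> = Some Z\<close> \<open>\<gamma> \<noteq> \<alpha>\<close> by (auto simp: seq_ok_def)
  have Cut_tp: "tp src tgt (Cut \<gamma> v h) (?\<Gamma>'(\<alpha> \<mapsto> X)) ?\<Delta>'" if "tp src tgt v (\<Gamma>(\<alpha> \<mapsto> X)) \<Delta>" for v X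
    using tp_Cut_into_right[OF that h] assms(3,4,6) \<open>\<gamma> \<notin> dom \<Gamma>\<close> dj by (simp add: map_add_upd_left)
  have "tp src tgt (case_family \<alpha> qs fs) (\<Gamma>(\<alpha> \<mapsto> Sum qs)) \<Delta>"
    using fs by (intro tp_case_family_Sum[OF so \<alpha>]) simp
  then have so': "seq_ok (?\<Gamma>'(\<alpha> \<mapsto> Sum qs)) ?\<Delta>'" by (rule tp_seq_ok[OF Cut_tp])
  have \<alpha>': "\<alpha> \<notin> dom ?\<Gamma>'" using \<alpha> dj by auto
  show ?thesis
  proof (rule cls_family_natural[where C = "\<lambda>v. Cut \<gamma> v h" and K = "case_family \<alpha> qs" and K' = "case_family \<alpha> qs"
        and G = "\<lambda>i. \<Gamma>(\<alpha> \<mapsto> map snd qs ! i)" and D = "\<lambda>i. \<Delta>"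
        and G' = "\<lambda>i. ?\<Gamma>'(\<alpha> \<mapsto> map snd qs ! i)" and D' = "\<lambda>i. ?\<Delta>'", OF Cut_tp Cut_tp])
    show "cstep (Cut \<gamma> v h) (Cut \<gamma> w h)" if "cstep v w" for v w
      using that by (rule cstep.intros)
    show "tp src tgt (case_family \<alpha> qs us) (\<Gamma>(\<alpha> \<mapsto> Sum qs)) \<Delta>"
      if "\<And>i. i < length (map snd qs) \<Longrightarrow> tp src tgt (us i) (\<Gamma>(\<alpha> \<mapsto> map snd qs ! i)) \<Delta>" for us
      using that by (intro tp_case_family_Sum[OF so \<alpha>]) simp
    show "tp src tgt (case_family \<alpha> qs us) (?\<Gamma>'(\<alpha> \<mapsto> Sum qs)) ?\<Delta>'"
      if "\<And>i. i < length (map snd qs) \<Longrightarrow> tp src tgt (us i) (?\<Gamma>'(\<alpha> \<mapsto> map snd qs ! i)) ?\<Delta>'" for us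
      using that by (intro tp_case_family_Sum[OF so' \<alpha>']) simp
    show "sim src tgt (?\<Gamma>'(\<alpha> \<mapsto> Sum qs)) ?\<Delta>' (case_family \<alpha> qs us) (case_family \<alpha> qs vs)"
      if "\<And>i. i < length (map snd qs) \<Longrightarrow> sim src tgt (?\<Gamma>'(\<alpha> \<mapsto> map snd qs ! i)) ?\<Delta>' (us i) (vs i)"
      for us vs
      using that by (intro sim_case_family_Sum[OF so' \<alpha>']) simp
    show "step (Cut \<gamma> (case_family \<alpha> qs us) h) (case_family \<alpha> qs (\<lambda>i. Cut \<gamma> (us i) h))" for us
      using \<open>\<gamma> \<noteq> \<alpha>\<close> by (intro step_Cut_case_family_left) simp
  qed (use fs t in auto)
qed

lemma Prod_natural_left:
  fixes \<alpha> :: 'c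
  assumes so: "seq_ok \<Gamma> (\<Delta>(\<alpha> \<mapsto> Prod qs))" and \<alpha>: "\<alpha> \<notin> dom \<Delta>" and "\<gamma> \<noteq> \<alpha>" and "\<Gamma> \<gamma> = Some Z"
    and h: "tp src tgt h \<Gamma>0 (\<Delta>0(\<gamma> \<mapsto> Z))" and "\<gamma> \<notin> dom \<Gamma>0 \<union> dom \<Delta>0"
    and dj: "(dom \<Gamma>0 \<union> dom \<Delta>0) \<inter> (dom \<Gamma> \<union> dom \<Delta> \<union> {\<alpha>}) = {}"
    and fs: "\<forall>i < length (map snd qs). tp src tgt (fs i) \<Gamma> (\<Delta>(\<alpha> \<mapsto> map snd qs ! i))"
    and t: "t \<in> cls src tgt \<Gamma> (\<Delta>(\<alpha> \<mapsto> Prod qs)) (case_family \<alpha> qs (\<lambda>i. repr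
              ((\<lambda>i\<in>{..<length (map snd qs)}. cls src tgt \<Gamma> (\<Delta>(\<alpha> \<mapsto> map snd qs ! i)) (fs i)) i)))"
  shows "cls src tgt (\<Gamma>0 ++ \<Gamma>(\<gamma> := None)) ((\<Delta>0 ++ \<Delta>)(\<alpha> \<mapsto> Prod qs)) (Cut \<gamma> h t) =
    cls src tgt (\<Gamma>0 ++ \<Gamma>(\<gamma> := None)) ((\<Delta>0 ++ \<Delta>)(\<alpha> \<mapsto> Prod qs)) (case_family \<alpha> qs (\<lambda>i. repr
      ((\<lambda>i\<in>{..<length (map snd qs)}. cls src tgt (\<Gamma>0 ++ \<Gamma>(\<gamma> := None))
         ((\<Delta>0 ++ \<Delta>)(\<alpha> \<mapsto> map snd qs ! i)) (Cut \<gamma> h (fs i))) i)))"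
proof -
  let ?\<Gamma>' = "\<Gamma>0 ++ \<Gamma>(\<gamma> := None)" and ?\<Delta>' = "\<Delta>0 ++ \<Delta>"
  have "\<gamma> \<notin> dom \<Delta>" using so \<open>\<Gamma> \<gamma> = Some Z\<close> \<open>\<gamma> \<noteq> \<alpha>\<close> by (auto simp: seq_ok_def)
  have Cut_tp: "tp src tgt (Cut \<gamma> h v) ?\<Gamma>' (?\<Delta>'(\<alpha> \<mapsto> X))" if "tp src tgt v \<Gamma> (\<Delta>(\<alpha> \<mapsto> X))" for v X
    using tp_Cut_into_left[OF h that] assms(3,4,6) \<open>\<gamma> \<notin> dom \<Delta>\<close> dj by simp
  have "tp src tgt (case_family \<alpha> qs fs) \<Gamma> (\<Delta>(\<alpha> \<mapsto> Prod qs))"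
    using fs by (intro tp_case_family_Prod[OF so \<alpha>]) simp
  then have so': "seq_ok ?\<Gamma>' (?\<Delta>'(\<alpha> \<mapsto> Prod qs))" by (rule tp_seq_ok[OF Cut_tp])
  have \<alpha>': "\<alpha> \<notin> dom ?\<Delta>'" using \<alpha> dj by auto
  show ?thesis
  proof (rule cls_family_natural[where C = "Cut \<gamma> h" and K = "case_family \<alpha> qs" and K' = "case_family \<alpha> qs"
        and G = "\<lambda>i. \<Gamma>" and D = "\<lambda>i. \<Delta>(\<alpha> \<mapsto> map snd qs ! i)"
        and G' = "\<lambda>i. ?\<Gamma>'" and D' = "\<lambda>i. ?\<Delta>'(\<alpha> \<mapsto> map snd qs ! i)", OF Cut_tp Cut_tp])
    show "cstep (Cut \<gamma> h v) (Cut \<gamma> h w)" if "cstep v w" for v w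
      using that by (rule cstep.intros)
    show "tp src tgt (case_family \<alpha> qs us) \<Gamma> (\<Delta>(\<alpha> \<mapsto> Prod qs))"
      if "\<And>i. i < length (map snd qs) \<Longrightarrow> tp src tgt (us i) \<Gamma> (\<Delta>(\<alpha> \<mapsto> map snd qs ! i))" for us
      using that by (intro tp_case_family_Prod[OF so \<alpha>]) simp
    show "tp src tgt (case_family \<alpha> qs us) ?\<Gamma>' (?\<Delta>'(\<alpha> \<mapsto> Prod qs))"
      if "\<And>i. i < length (map snd qs) \<Longrightarrow> tp src tgt (us i) ?\<Gamma>' (?\<Delta>'(\<alpha> \<mapsto> map snd qs ! i))" for us
      using that by (intro tp_case_family_Prod[OF so' \<alpha>']) simp
    show "sim src tgt ?\<Gamma>' (?\<Delta>'(\<alpha> \<mapsto> Prod qs)) (case_family \<alpha> qs us) (case_family \<alpha> qs vs)"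
      if "\<And>i. i < length (map snd qs) \<Longrightarrow> sim src tgt ?\<Gamma>' (?\<Delta>'(\<alpha> \<mapsto> map snd qs ! i)) (us i) (vs i)"
      for us vs
      using that by (intro sim_case_family_Prod[OF so' \<alpha>']) simp
    show "step (Cut \<gamma> h (case_family \<alpha> qs us)) (case_family \<alpha> qs (\<lambda>i. Cut \<gamma> h (us i)))" for us
      using \<open>\<gamma> \<noteq> \<alpha>\<close> by (intro step_Cut_case_family_right) simp
  qed (use fs t in auto)
qed

lemma Prod_natural_right:
  fixes \<alpha> :: 'c
  assumes so: "seq_ok \<Gamma> (\<Delta>(\<alpha> \<mapsto> Prod qs))" and \<alpha>: "\<alpha> \<notin> dom \<Delta>" and "\<gamma> \<noteq> \<alpha>" and "\<Delta> \<gamma> = Some Z"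
    and h: "tp src tgt h (\<Gamma>0(\<gamma> \<mapsto> Z)) \<Delta>0" and "\<gamma> \<notin> dom \<Gamma>0 \<union> dom \<Delta>0"
    and dj: "(dom \<Gamma>0 \<union> dom \<Delta>0) \<inter> (dom \<Gamma> \<union> dom \<Delta> \<union> {\<alpha>}) = {}"
    and fs: "\<forall>i < length (map snd qs). tp src tgt (fs i) \<Gamma> (\<Delta>(\<alpha> \<mapsto> map snd qs ! i))"
    and t: "t \<in> cls src tgt \<Gamma> (\<Delta>(\<alpha> \<mapsto> Prod qs)) (case_family \<alpha> qs (\<lambda>i. repr
              ((\<lambda>i\<in>{..<length (map snd qs)}. cls src tgt \<Gamma> (\<Delta>(\<alpha> \<mapsto> map snd qs ! i)) (fs i)) i)))"
  shows "cls src tgt (\<Gamma> ++ \<Gamma>0) ((\<Delta>(\<gamma> := None) ++ \<Delta>0)(\<alpha> \<mapsto> Prod qs)) (Cut \<gamma> t h) =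
    cls src tgt (\<Gamma> ++ \<Gamma>0) ((\<Delta>(\<gamma> := None) ++ \<Delta>0)(\<alpha> \<mapsto> Prod qs)) (case_family \<alpha> qs (\<lambda>i. repr
      ((\<lambda>i\<in>{..<length (map snd qs)}. cls src tgt (\<Gamma> ++ \<Gamma>0)
         ((\<Delta>(\<gamma> := None) ++ \<Delta>0)(\<alpha> \<mapsto> map snd qs ! i)) (Cut \<gamma> (fs i) h)) i)))"
proof -
  let ?\<Gamma>' = "\<Gamma> ++ \<Gamma>0" and ?\<Delta>' = "\<Delta>(\<gamma> := None) ++ \<Delta>0"
  have "\<gamma> \<notin> dom \<Gamma>" using so \<open>\<Delta> \<gamma> = Some Z\<close> \<open>\<gamma> \<noteq> \<alpha>\<close> by (auto simp: seq_ok_def)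
  have Cut_tp: "tp src tgt (Cut \<gamma> v h) ?\<Gamma>' (?\<Delta>'(\<alpha> \<mapsto> X))" if "tp src tgt v \<Gamma> (\<Delta>(\<alpha> \<mapsto> X))" for v X
    using tp_Cut_into_right[OF that h] assms(3,4,6) \<open>\<gamma> \<notin> dom \<Gamma>\<close> dj
    by (simp add: fun_upd_twist map_add_upd_left)
  have "tp src tgt (case_family \<alpha> qs fs) \<Gamma> (\<Delta>(\<alpha> \<mapsto> Prod qs))"
    using fs by (intro tp_case_family_Prod[OF so \<alpha>]) simp
  then have so': "seq_ok ?\<Gamma>' (?\<Delta>'(\<alpha> \<mapsto> Prod qs))" by (rule tp_seq_ok[OF Cut_tp])
  have \<alpha>': "\<alpha> \<notin> dom ?\<Delta>'" using \<alpha> dj by auto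
  show ?thesis
  proof (rule cls_family_natural[where C = "\<lambda>v. Cut \<gamma> v h" and K = "case_family \<alpha> qs" and K' = "case_family \<alpha> qs"
        and G = "\<lambda>i. \<Gamma>" and D = "\<lambda>i. \<Delta>(\<alpha> \<mapsto> map snd qs ! i)"
        and G' = "\<lambda>i. ?\<Gamma>'" and D' = "\<lambda>i. ?\<Delta>'(\<alpha> \<mapsto> map snd qs ! i)", OF Cut_tp Cut_tp])
    show "cstep (Cut \<gamma> v h) (Cut \<gamma> w h)" if "cstep v w" for v w
      using that by (rule cstep.intros)
    show "tp src tgt (case_family \<alpha> qs us) \<Gamma> (\<Delta>(\<alpha> \<mapsto> Prod qs))"
      if "\<And>i. i < length (map snd qs) \<Longrightarrow> tp src tgt (us i) \<Gamma> (\<Delta>(\<alpha> \<mapsto> map snd qs ! i))" for us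
      using that by (intro tp_case_family_Prod[OF so \<alpha>]) simp
    show "tp src tgt (case_family \<alpha> qs us) ?\<Gamma>' (?\<Delta>'(\<alpha> \<mapsto> Prod qs))"
      if "\<And>i. i < length (map snd qs) \<Longrightarrow> tp src tgt (us i) ?\<Gamma>' (?\<Delta>'(\<alpha> \<mapsto> map snd qs ! i))" for us
      using that by (intro tp_case_family_Prod[OF so' \<alpha>']) simp
    show "sim src tgt ?\<Gamma>' (?\<Delta>'(\<alpha> \<mapsto> Prod qs)) (case_family \<alpha> qs us) (case_family \<alpha> qs vs)"
      if "\<And>i. i < length (map snd qs) \<Longrightarrow> sim src tgt ?\<Gamma>' (?\<Delta>'(\<alpha> \<mapsto> map snd qs ! i)) (us i) (vs i)"
      for us vs
      using that by (intro sim_case_family_Prod[OF so' \<alpha>']) simp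
    show "step (Cut \<gamma> (case_family \<alpha> qs us) h) (case_family \<alpha> qs (\<lambda>i. Cut \<gamma> (us i) h))" for us
      using \<open>\<gamma> \<noteq> \<alpha>\<close> by (intro step_Cut_case_family_left) simp
  qed (use fs t in auto)
qed

lemma is_poly_sum_Sum: "is_poly_sum TYPE('c) src tgt (Sum qs) (map snd qs)"
  unfolding is_poly_sum_def
  by (intro exI[where x = "\<lambda>\<Gamma> \<Delta> \<alpha> F. cls src tgt (\<Gamma>(\<alpha> \<mapsto> Sum qs)) \<Delta> (case_family \<alpha> qs (\<lambda>i. repr (F i)))"]
        conjI allI impI; elim conjE)
     (rule bij_betw_hom_Sum Sum_natural_left Sum_natural_right; assumption)+

lemma is_poly_product_Prod: "is_poly_product TYPE('c) src tgt (Prod qs) (map snd qs)"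
  unfolding is_poly_product_def
  by (intro exI[where x = "\<lambda>\<Gamma> \<Delta> \<alpha> F. cls src tgt \<Gamma> (\<Delta>(\<alpha> \<mapsto> Prod qs)) (case_family \<alpha> qs (\<lambda>i. repr (F i)))"]
        conjI allI impI; elim conjE)
     (rule bij_betw_hom_Prod Prod_natural_left Prod_natural_right; assumption)+

end

theorem mainTheorem2:
  fixes src tgt :: "'m \<Rightarrow> 'a list" and idm :: "'a \<Rightarrow> 'm"
    and cmp :: "'m \<Rightarrow> nat \<Rightarrow> nat \<Rightarrow> 'm \<Rightarrow> 'm"
    and qs :: "('e \<times> ('a, 'e) fm) list"
  assumes "polycategory src tgt idm cmp"
    and "infinite (UNIV :: 'c set)"
    and "distinct (map fst qs)"
    and "\<forall>p \<in> set qs. wf_fm (snd p)"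
  shows "is_poly_sum TYPE('c) src tgt (Sum qs) (map snd qs) \<and>
         is_poly_product TYPE('c) src tgt (Prod qs) (map snd qs)"
  using is_poly_sum_Sum[OF assms(2)] is_poly_product_Prod[OF assms(2)] by blast

end
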